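(* Let $B,\alpha_+,\beta_+,\gamma_+,\delta_+,\beta_-,\gamma_-$ be real numbers with $B>\delta_+>0$, and let $I:[0,b[\to\mathbb R$ be the slow divergence integral defined in the context. If $$\big(\beta_-\ne 0 \text{ and } (\alpha_+,\gamma_-)\ne(0,0)\big)\quad\text{or}\quad\big(\beta_-=0 \text{ and } \alpha_++\gamma_-(B-\delta_+)\ne 0\big),$$ then $I$ has at most $1$ zero, counting multiplicity, in $]0,b[$. Moreover, there exist parameter values $(\beta_-,\gamma_-,B,\alpha_+,\delta_+)$ satisfying this condition for which $I$ has a simple zero in $]0,b[$. If the condition is not satisfied, then $I$ is identically zero.
   Context: Consider the planar affine vector fields $Z^-(x,y)=(-1+\beta_- y,\,-x+\gamma_- y)$ and $Z^+(x,y)=(B+\alpha_+x+\beta_+y,\,\delta_+x+\gamma_+y)$, with $B>\delta_+>0$ ($Z^+$ acts in $y>0$, $Z^-$ in $y<0$, discontinuity line $y=0$). Let $X^{sl}(u)=\frac{1}{1+\delta_+}(B-\delta_++\alpha_+u)$ (the Filippov sliding vector field on $y=0$). Poincaré half-map $\Pi$: for $x>0$ the forward orbit of $Z^-$ through $(x,0)$ enters $\{y<0\}$; when it returns to $\{y=0\}$, its first return point is $(\Pi(x),0)$ with $\Pi(x)<0$; set $\Pi(0)=0$. The domain of $\Pi$ is the set of $x\ge 0$ where it is defined (an interval containing $0$). Let $\phi:\mathbb R\to\mathbb R$ be a smooth function with $\phi'>0$, $\phi(s)\to 1$ as $s\to+\infty$, $\phi(s)\to0$ as $s\to-\infty$.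 The slow divergence integral is $$I(x)=(1+\delta_+)\,\phi'\!\Big(\phi^{-1}\big(\tfrac{1}{1+\delta_+}\big)\Big)\int_{\Pi(x)}^{x}\frac{u\,du}{X^{sl}(u)},$$ defined on $[0,b[$ ($b>0$ or $b=+\infty$), the largest interval of the form $[0,b[$ contained in the domain of $\Pi$ such that $X^{sl}>0$ on $[\Pi(x),x]$ for every $x\in[0,b[$. *)

theory Defs
  imports "HOL-Analysis.Analysis"
begin

text \<open>The affine vector field Z^- acting in y < 0.\<close>
definition Zm :: "real \<Rightarrow> real \<Rightarrow> real \<times> real \<Rightarrow> real \<times> real" where
  "Zm bm gm z = (-1 + bm * snd z, - fst z + gm * snd z)"

text \<open>Filippov sliding vector field on y = 0.\<close>
definition Xsl :: "real \<Rightarrow> real \<Rightarrow> real \<Rightarrow> real \<Rightarrow> real" where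
  "Xsl B ap dp u = (B - dp + ap * u) / (1 + dp)"

definition pi_ret :: "real \<Rightarrow> real \<Rightarrow> real \<Rightarrow> real \<Rightarrow> bool" where
  "pi_ret bm gm x u \<longleftrightarrow>
     (\<exists>p t. t > 0 \<and> p 0 = (x, 0) \<and>
        (\<forall>s. (p has_vector_derivative Zm bm gm (p s)) (at s)) \<and>
        (\<forall>s\<in>{0<..<t}. snd (p s) < 0) \<and> p t = (u, 0))"

definition Pi_map :: "real \<Rightarrow> real \<Rightarrow> real \<Rightarrow> real" where
  "Pi_map bm gm x = (if x = 0 then 0 else (THE u. pi_ret bm gm x u))"

definition Pi_dom :: "real \<Rightarrow> real \<Rightarrow> real set" where
  "Pi_dom bm gm = {x. x = 0 \<or> (x > 0 \<and> (\<exists>u. pi_ret bm gm x u))}"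

definition good_set :: "real \<Rightarrow> real \<Rightarrow> real \<Rightarrow> real \<Rightarrow> real \<Rightarrow> real set" where
  "good_set B ap dp bm gm =
     {x \<in> Pi_dom bm gm. \<forall>u\<in>{Pi_map bm gm x..x}. Xsl B ap dp u > 0}"

text \<open>The open interval ]0,b[ where [0,b[ is the largest interval of that form
  contained in good_set.\<close>
definition open_int :: "real \<Rightarrow> real \<Rightarrow> real \<Rightarrow> real \<Rightarrow> real \<Rightarrow> real set" where
  "open_int B ap dp bm gm = {x. x > 0 \<and> {0..x} \<subseteq> good_set B ap dp bm gm}"

definition sdi :: "(real \<Rightarrow> real) \<Rightarrow> real \<Rightarrow> real \<Rightarrow> real \<Rightarrow> real \<Rightarrow> real \<Rightarrow> real \<Rightarrow> real" where
  "sdi phi B ap dp bm gm x =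
     (1 + dp) * deriv phi (inv phi (1 / (1 + dp))) *
     integral {Pi_map bm gm x..x} (\<lambda>u. u / Xsl B ap dp u)"

definition simple_zero :: "(real \<Rightarrow> real) \<Rightarrow> real \<Rightarrow> bool" where
  "simple_zero f x \<longleftrightarrow> f x = 0 \<and> (\<exists>d. (f has_real_derivative d) (at x) \<and> d \<noteq> 0)"

definition at_most_one_zero_mult :: "(real \<Rightarrow> real) \<Rightarrow> real set \<Rightarrow> bool" where
  "at_most_one_zero_mult f S \<longleftrightarrow>
     (\<forall>x\<in>S. f x = 0 \<longrightarrow> simple_zero f x) \<and>
     (\<forall>x\<in>S. \<forall>y\<in>S. f x = 0 \<and> f y = 0 \<longrightarrow> x = y)"

definition sdi_cond :: "real \<Rightarrow> real \<Rightarrow> real \<Rightarrow> real \<Rightarrow> real \<Rightarrow> bool" where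
  "sdi_cond bm gm B ap dp \<longleftrightarrow>
     (bm \<noteq> 0 \<and> (ap, gm) \<noteq> (0, 0)) \<or> (bm = 0 \<and> ap + gm * (B - dp) \<noteq> 0)"

end

theory Submission imports Defs begin

text \<open>
  Write \<open>b = \<beta>\<^sub>-\<close>, \<open>g = \<gamma>\<^sub>-\<close>, \<open>a = \<alpha>\<^sub>+\<close>, \<open>\<delta> = \<delta>\<^sub>+\<close>. In the coordinates
  \<open>D = 1 - b y\<close>, \<open>V = x - g y\<close> an orbit of \<open>Z\<^sup>-\<close> is linear, \<open>D' = b V\<close>, \<open>V' = - D + g V\<close>;
  so \<open>u = V / D\<close> obeys \<open>u' = - W(u)\<close> with \<open>W(v) = 1 - g v + b v\<^sup>2\<close>, while \<open>ln D / b\<close>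
  (or \<open>- y\<close> if \<open>b = 0\<close>) has derivative \<open>u\<close>. Hence \<open>\<integral>\<^sub>u\<^sup>x v / W(v) dv\<close> minus that
  quantity is conserved, and back on the axis, where \<open>D = 1\<close> and \<open>u\<close> is the abscissa, the
  half-map satisfies \<open>\<integral>\<^bsub>\<Pi>(x)\<^esub>\<^sup>x v / W(v) dv = 0\<close>. Conversely every solution of this
  equation is reached by the flow, so \<open>\<Pi>\<close> inverts a strictly monotone primitive and
  \<open>\<Pi>'(x) = x W(\<Pi>(x)) / (\<Pi>(x) W(x))\<close>.

  Differentiating, \<open>I'(x)\<close> is a positive multiple of
  \<open>ell(x) = a b x \<Pi>(x) + b (B - \<delta>) (x + \<Pi>(x)) - (a + (B - \<delta>) g)\<close>. At every zero of
  \<open>ell\<close> the derivative of \<open>b g ell\<close> has the sign of \<open>g (x + \<Pi>(x)) / \<Pi>(x)\<close>, which is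
  positive because \<open>\<Pi>(x) < - x\<close> exactly when \<open>g > 0\<close>; so \<open>ell\<close> has at most one zero, and
  since \<open>I(0) = 0\<close>, Rolle's theorem turns two zeros or a double zero of \<open>I\<close> into two zeros of
  \<open>ell\<close>. When the condition fails, either \<open>u / X\<^sup>s\<^sup>l(u)\<close> is a multiple of \<open>u / W(u)\<close>, or
  \<open>\<Pi>(x) = - x\<close> and the integrand is odd. For \<open>b = g = B = 2\<close>, \<open>a = -1\<close>, \<open>\<delta> = 1\<close> the
  integral is negative near \<open>0\<close> and tends to \<open>+\<infinity>\<close> as \<open>x \<rightarrow> 1\<close>, where the sliding field
  vanishes.
\<close>

section \<open>Elementary real analysis\<close>

lemma linear_ode_eq_exp:
  fixes f :: "real \<Rightarrow> real"
  assumes "\<And>s. (f has_real_derivative k * f s) (at s)"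
  shows "f s = f 0 * exp (k * s)"
proof -
  have "((\<lambda>s. f s * exp (- k * s)) has_real_derivative 0) (at s)" for s
    by (auto intro!: derivative_eq_intros assms simp: algebra_simps)
  then have "f s * exp (- k * s) = f 0 * exp (- k * 0)"
    using DERIV_isconst_all by blast
  then show ?thesis
    by (simp add: exp_minus field_simps)
qed

lemma integral_has_real_derivative_interior:
  fixes f :: "real \<Rightarrow> real"
  assumes "continuous_on {a..b} f" "a < v" "v < b"
  shows "((\<lambda>v. integral {a..v} f) has_real_derivative f v) (at v)"
  using integral_has_real_derivative[OF assms(1), of v] assms(2,3) by (simp add: at_within_Icc_at)

lemma integral_combine_continuous:
  fixes f :: "real \<Rightarrow> real"
  assumes "continuous_on {a..b} f" "a \<le> c" "c \<le> b"
  shows "integral {a..b} f = integral {a..c} f + integral {c..b} f"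
  using Henstock_Kurzweil_Integration.integral_combine[OF assms(2,3) integrable_continuous_interval[OF assms(1)]] by simp

lemma integral_pos_real:
  fixes f :: "real \<Rightarrow> real"
  assumes "continuous_on {a..b} f" "a < b" "\<And>v. a < v \<Longrightarrow> v < b \<Longrightarrow> f v > 0"
  shows "integral {a..b} f > 0"
  using integral_less_real[of a b "\<lambda>_. 0" f] assms by auto

lemma integral_neg_real:
  fixes f :: "real \<Rightarrow> real"
  assumes "continuous_on {a..b} f" "a < b" "\<And>v. a < v \<Longrightarrow> v < b \<Longrightarrow> f v < 0"
  shows "integral {a..b} f < 0"
  using integral_less_real[of a b f "\<lambda>_. 0"] assms by auto

lemma integral_symmetric_interval:
  fixes f :: "real \<Rightarrow> real"
  assumes "continuous_on {-y..y} f" "y \<ge> 0"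
  shows "integral {-y..y} f = integral {0..y} (\<lambda>v. f v + f (- v))"
proof -
  have "continuous_on {0..y} (\<lambda>v. f (- v))"
    by (rule continuous_on_compose2[OF assms(1)]) (auto intro!: continuous_intros)
  then have "integral {0..y} (\<lambda>v. f v + f (- v)) = integral {0..y} f + integral {0..y} (\<lambda>v. f (- v))"
    using assms by (intro integral_add integrable_continuous_interval continuous_on_subset[OF assms(1)]) auto
  also have "integral {0..y} (\<lambda>v. f (- v)) = integral {-y..0} f"
    using Henstock_Kurzweil_Integration.integral_reflect_real[of 0 "- y" f] by simp
  finally show ?thesis
    using integral_combine_continuous[OF assms(1), of 0] assms(2) by simp
qed

lemma first_zero_after_decrease:
  fixes f :: "real \<Rightarrow> real"
  assumes ab: "a < b" and cont: "continuous_on {a..b} f" and fa: "f a = 0"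
    and der: "(f has_real_derivative d) (at a)" "d < 0" and fb: "f b \<ge> 0"
  obtains t where "a < t" "t \<le> b" "f t = 0" "\<And>s. a < s \<Longrightarrow> s < t \<Longrightarrow> f s < 0"
proof -
  obtain \<delta> where \<delta>: "\<delta> > 0" "\<And>h. 0 < h \<Longrightarrow> h < \<delta> \<Longrightarrow> f (a + h) < 0"
    using DERIV_neg_dec_right[OF der] fa by auto
  define c where "c = a + min (\<delta> / 2) ((b - a) / 2)"
  have c: "a < c" "c < b"
    using \<delta>(1) ab by (auto simp: c_def min_def field_simps)
  have neg_near: "f s < 0" if "a < s" "s \<le> c" for s
    using \<delta>(2)[of "s - a"] that \<delta>(1) by (simp add: c_def)
  have zero_between: "\<exists>z. c \<le> z \<and> z \<le> s \<and> f z = 0" if "c \<le> s" "s \<le> b" "f s \<ge> 0" for s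
    using IVT'[of f c 0 s, OF _ _ _ continuous_on_subset[OF cont]] neg_near[of c] c that by force
  define Z where "Z = {c..b} \<inter> f -` {0}"
  have Z_bdd: "bdd_below Z"
    unfolding Z_def by (rule bdd_belowI[of _ c]) auto
  have "closed Z"
    unfolding Z_def by (rule continuous_closed_preimage[OF continuous_on_subset[OF cont]]) (use c in auto)
  moreover have "Z \<noteq> {}"
    using zero_between[of b] c fb by (auto simp: Z_def)
  ultimately have "Inf Z \<in> Z"
    using Z_bdd by (intro closed_contains_Inf)
  then have t: "c \<le> Inf Z" "Inf Z \<le> b" "f (Inf Z) = 0"
    by (auto simp: Z_def)
  have neg: "f s < 0" if "a < s" "s < Inf Z" for s
  proof (rule ccontr)
    assume "\<not> f s < 0"
    with neg_near[of s] that have "c < s"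
      by force
    with zero_between[of s] \<open>\<not> f s < 0\<close> that t obtain z where "c \<le> z" "z \<le> s" "f z = 0"
      by auto
    then have "Inf Z \<le> z"
      using that t by (intro cInf_lower[OF _ Z_bdd]) (auto simp: Z_def)
    with \<open>z \<le> s\<close> that show False
      by simp
  qed
  show ?thesis
    by (rule that[of "Inf Z"]) (use t c neg in auto)
qed

lemma zero_unique_if_transversal:
  fixes f f' :: "real \<Rightarrow> real"
  assumes ab: "a \<le> b" and der: "\<And>s. s \<in> {a..b} \<Longrightarrow> (f has_real_derivative f' s) (at s)"
    and transversal: "\<And>s. s \<in> {a..b} \<Longrightarrow> f s = 0 \<Longrightarrow> f' s > 0" and fa: "f a = 0" and fb: "f b = 0"
  shows "a = b"
proof (rule ccontr)
  assume "a \<noteq> b"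
  with ab have "a < b" by simp
  have cont: "continuous_on {a..b} (\<lambda>s. - f s)"
    by (intro continuous_intros continuous_at_imp_continuous_on) (use der DERIV_isCont in blast)
  have d: "((\<lambda>s. - f s) has_real_derivative - f' a) (at a)" "- f' a < 0"
    using der[of a] transversal[of a] fa ab by (auto intro: DERIV_minus)
  obtain t where t: "a < t" "t \<le> b" "- f t = 0" and pos: "\<And>s. a < s \<Longrightarrow> s < t \<Longrightarrow> - f s < 0"
    by (rule first_zero_after_decrease[OF \<open>a < b\<close> cont _ d]) (use fa fb in auto)
  obtain \<delta> where "\<delta> > 0" and neg: "\<And>h. 0 < h \<Longrightarrow> h < \<delta> \<Longrightarrow> f (t - h) < 0"
    using DERIV_pos_inc_left[OF der[of t] transversal[of t]] t by auto
  define h where "h = min (\<delta> / 2) ((t - a) / 2)"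
  have "0 < h" "h < \<delta>" "a < t - h"
    using \<open>\<delta> > 0\<close> t(1) by (auto simp: h_def min_def field_simps)
  then show False
    using neg[of h] pos[of "t - h"] by simp
qed

lemma pos_on_Icc_extends:
  fixes f :: "real \<Rightarrow> real"
  assumes cont: "\<And>v. isCont f v" and pos: "\<And>v. v \<in> {a..b} \<Longrightarrow> f v > 0" and "a \<le> b"
  obtains \<epsilon> where "\<epsilon> > 0" "\<And>v. v \<in> {a - \<epsilon>..b + \<epsilon>} \<Longrightarrow> f v > 0"
proof -
  have "open {v. f v > 0}"
    using cont by (intro open_Collect_less continuous_intros) (simp add: continuous_at_imp_continuous_on)
  moreover have "{a..b} \<subseteq> {v. f v > 0}"
    using pos by blast
  ultimately obtain \<epsilon> where \<epsilon>: "\<epsilon> > 0" "(\<Union>v\<in>{a..b}. ball v \<epsilon>) \<subseteq> {v. f v > 0}"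
    by (rule compact_subset_open_imp_ball_epsilon_subset[OF compact_Icc])
  have "f v > 0" if v: "v \<in> {a - \<epsilon> / 2..b + \<epsilon> / 2}" for v
  proof -
    have "v \<in> ball (max a (min b v)) \<epsilon>" "max a (min b v) \<in> {a..b}"
      using v \<epsilon>(1) \<open>a \<le> b\<close> by (auto simp: dist_real_def)
    then show ?thesis
      using \<epsilon>(2) by blast
  qed
  then show ?thesis
    using that[of "\<epsilon> / 2"] \<epsilon>(1) by simp
qed

lemma has_vector_derivative_fst:
  assumes "(p has_vector_derivative v) (at s)"
  shows "((\<lambda>s. fst (p s)) has_real_derivative fst v) (at s)"
  using has_derivative_fst[OF assms[unfolded has_vector_derivative_def]]
  by (simp add: has_field_derivative_def mult_commute_abs)

lemma has_vector_derivative_snd: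
  assumes "(p has_vector_derivative v) (at s)"
  shows "((\<lambda>s. snd (p s)) has_real_derivative snd v) (at s)"
  using has_derivative_snd[OF assms[unfolded has_vector_derivative_def]]
  by (simp add: has_field_derivative_def mult_commute_abs)

lemma DERIV_inverse_function_open:
  fixes f g :: "real \<Rightarrow> real"
  assumes "open S" "x \<in> S" "continuous_on S f" "\<And>z. z \<in> S \<Longrightarrow> g (f z) = z"
    and "(f has_real_derivative d) (at x)" "d \<noteq> 0"
  shows "(g has_real_derivative inverse d) (at (f x))"
  unfolding has_field_derivative_def
  by (rule has_derivative_inverse_strong[OF assms(1-4)])
     (use assms(5,6) in \<open>auto simp: has_field_derivative_def fun_eq_iff\<close>)

lemma integral_eq_primitive_diff:
  fixes F f :: "real \<Rightarrow> real"
  assumes "a \<le> b" "\<And>v. v \<in> {a..b} \<Longrightarrow> (F has_real_derivative f v) (at v)"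
  shows "integral {a..b} f = F b - F a"
  using assms
  by (intro integral_unique fundamental_theorem_of_calculus)
    (auto simp: has_real_derivative_iff_has_vector_derivative[symmetric] intro: has_field_derivative_at_within)

section \<open>The return-point equation\<close>

definition W_quad :: "real \<Rightarrow> real \<Rightarrow> real \<Rightarrow> real" where
  "W_quad b g v = 1 - g * v + b * v\<^sup>2"

definition W_integrand :: "real \<Rightarrow> real \<Rightarrow> real \<Rightarrow> real" where
  "W_integrand b g v = v / W_quad b g v"

text \<open>The equation characterizing the half-map without reference to the flow, see
  \<open>return_point_of_pi_ret\<close> and \<open>pi_ret_iff_return_point\<close>.\<close>
definition return_point :: "real \<Rightarrow> real \<Rightarrow> real \<Rightarrow> real \<Rightarrow> bool" where
  "return_point b g x q \<longleftrightarrow>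
     q < 0 \<and> (\<forall>v\<in>{q..x}. W_quad b g v > 0) \<and> integral {q..x} (W_integrand b g) = 0"

lemma isCont_W_quad: "isCont (W_quad b g) v"
  unfolding W_quad_def by (intro continuous_intros)

lemma continuous_on_W_integrand:
  assumes "\<And>v. v \<in> S \<Longrightarrow> W_quad b g v > 0"
  shows "continuous_on S (W_integrand b g)"
proof (intro continuous_at_imp_continuous_on ballI)
  fix v assume "v \<in> S"
  then have "W_quad b g v \<noteq> 0"
    using assms[of v] by simp
  then show "isCont (W_integrand b g) v"
    unfolding W_integrand_def[abs_def] by (intro continuous_intros isCont_W_quad)
qed

lemma W_quad_reflect: "W_quad b g (- v) = W_quad b g v + 2 * g * v"
  by (simp add: W_quad_def)

lemma W_integrand_sum_reflect:
  assumes "W_quad b g v \<noteq> 0" "W_quad b g (- v) \<noteq> 0"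
  shows "W_integrand b g v + W_integrand b g (- v) = 2 * g * v\<^sup>2 / (W_quad b g v * W_quad b g (- v))"
  using assms unfolding W_integrand_def by (simp add: field_simps W_quad_def power2_eq_square)

locale W_window =
  fixes b g lo hi :: real
  assumes lo_neg: "lo < 0" and hi_pos: "0 < hi"
    and W_pos: "\<And>v. v \<in> {lo..hi} \<Longrightarrow> W_quad b g v > 0"
begin

definition Phi :: "real \<Rightarrow> real" where
  "Phi v = integral {lo..v} (W_integrand b g)"

lemma Phi_lo: "Phi lo = 0"
  by (simp add: Phi_def)

lemma W_integrand_cont: "continuous_on {lo..hi} (W_integrand b g)"
  using W_pos by (intro continuous_on_W_integrand) auto

lemma Phi_diff:
  assumes "lo \<le> v" "v \<le> w" "w \<le> hi"
  shows "integral {v..w} (W_integrand b g) = Phi w - Phi v"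
  using integral_combine_continuous[OF continuous_on_subset[OF W_integrand_cont], where a = lo and c = v and b = w] assms
  by (simp add: Phi_def)

lemma Phi_cont: "continuous_on {lo..hi} Phi"
  unfolding Phi_def[abs_def]
  by (rule indefinite_integral_continuous_1[OF integrable_continuous_interval[OF W_integrand_cont]])

lemma Phi_deriv: "lo < v \<Longrightarrow> v < hi \<Longrightarrow> (Phi has_real_derivative W_integrand b g v) (at v)"
  unfolding Phi_def[abs_def] by (rule integral_has_real_derivative_interior[OF W_integrand_cont])

lemma Phi_strict_decreasing:
  assumes "lo \<le> v" "v < w" "w \<le> 0"
  shows "Phi w < Phi v"
proof -
  have "integral {v..w} (W_integrand b g) < 0"
  proof (rule integral_neg_real[OF continuous_on_subset[OF W_integrand_cont] \<open>v < w\<close>])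
    fix z assume "v < z" "z < w"
    then show "W_integrand b g z < 0"
      using W_pos[of z] assms hi_pos by (auto simp: W_integrand_def divide_neg_pos)
  qed (use assms hi_pos in auto)
  then show ?thesis
    using Phi_diff[of v w] assms hi_pos by simp
qed

lemma Phi_strict_increasing:
  assumes "0 \<le> v" "v < w" "w \<le> hi"
  shows "Phi v < Phi w"
proof -
  have "integral {v..w} (W_integrand b g) > 0"
  proof (rule integral_pos_real[OF continuous_on_subset[OF W_integrand_cont] \<open>v < w\<close>])
    fix z assume "v < z" "z < w"
    then show "W_integrand b g z > 0"
      using W_pos[of z] assms lo_neg by (auto simp: W_integrand_def)
  qed (use assms lo_neg in auto)
  then show ?thesis
    using Phi_diff[of v w] assms lo_neg by simp
qed

lemma return_point_iff_Phi_eq: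
  assumes "0 < y" "y \<le> hi" "lo \<le> q" "q < 0"
  shows "return_point b g y q \<longleftrightarrow> Phi q = Phi y"
  using Phi_diff[of q y] W_pos assms by (auto simp: return_point_def)

lemma Phi_reflect_diff:
  assumes "0 < y" "lo \<le> - y" "y \<le> hi"
  obtains c where "c > 0" "Phi y - Phi (- y) = g * c"
proof -
  define k where "k v = 2 * v\<^sup>2 / (W_quad b g v * W_quad b g (- v))" for v
  have Wv: "W_quad b g v > 0" "W_quad b g (- v) > 0" if "v \<in> {0..y}" for v
    using W_pos that assms by auto
  have k_cont: "continuous_on {0..y} k"
    unfolding k_def using Wv
    by (intro continuous_intros continuous_at_imp_continuous_on ballI isCont_W_quad
        continuous_at_compose[of _ uminus, unfolded o_def, OF _ isCont_W_quad]) force+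
  have "Phi y - Phi (- y) = integral {0..y} (\<lambda>v. W_integrand b g v + W_integrand b g (- v))"
    using Phi_diff[of "- y" y] assms
    by (simp add: integral_symmetric_interval continuous_on_subset[OF W_integrand_cont])
  also have "\<dots> = integral {0..y} (\<lambda>v. g * k v)"
    using Wv by (intro integral_cong) (simp add: W_integrand_sum_reflect k_def less_imp_neq[symmetric])
  also have "\<dots> = g * integral {0..y} k"
    by simp
  finally show ?thesis
    using that integral_pos_real[OF k_cont \<open>0 < y\<close>] Wv by (force simp: k_def)
qed

end

lemma W_window_of_return_point:
  "return_point b g x q \<Longrightarrow> x > 0 \<Longrightarrow> W_window b g q x"
  by unfold_locales (auto simp: return_point_def)

lemma return_point_unique:
  assumes "x > 0" "return_point b g x p" "return_point b g x q"
  shows "p = q"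
proof -
  have "p = q" if "p \<le> q" "return_point b g x p" "return_point b g x q" for p q
  proof -
    interpret W_window b g p x
      using W_window_of_return_point that(2) \<open>x > 0\<close> .
    have "Phi p = Phi q"
      using that \<open>x > 0\<close> return_point_iff_Phi_eq[of x] by (auto simp: return_point_def)
    then show ?thesis
      using Phi_strict_decreasing[of p q] that by (force simp: return_point_def)
  qed
  from this[of p q] this[of q p] assms show ?thesis
    by linarith
qed

lemma return_point_antimono:
  assumes "0 < y" "y < z" "return_point b g y p" "return_point b g z q"
  shows "q < p"
proof (rule ccontr)
  assume "\<not> q < p"
  then have "p \<le> q" "p < 0" "q < 0"
    using assms by (auto simp: return_point_def)
  have "W_quad b g v > 0" if "v \<in> {p..z}" for v
    using assms that \<open>q < 0\<close> by (cases "v \<le> y") (auto simp: return_point_def)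
  then interpret W_window b g p z
    using \<open>p < 0\<close> assms by unfold_locales auto
  have "Phi p = Phi y" "Phi q = Phi z"
    using assms \<open>p \<le> q\<close> \<open>p < 0\<close> \<open>q < 0\<close> return_point_iff_Phi_eq by auto
  moreover have "Phi y < Phi z"
    using Phi_strict_increasing[of y z] assms by simp
  moreover have "Phi q \<le> Phi p"
    using Phi_strict_decreasing[of p q] \<open>p \<le> q\<close> \<open>q < 0\<close> by (cases "p = q") auto
  ultimately show False
    by simp
qed

lemma return_point_sign:
  assumes x: "x > 0" and r: "return_point b g x r"
  shows "(g > 0 \<longrightarrow> r < - x) \<and> (g < 0 \<longrightarrow> r > - x) \<and> (g = 0 \<longrightarrow> r = - x)"
proof -
  have r_neg: "r < 0" and W_r: "\<And>v. v \<in> {r..x} \<Longrightarrow> W_quad b g v > 0"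
    using r by (auto simp: return_point_def)
  have W_sym: "W_quad b g v > 0" if "g \<ge> 0" "v \<in> {-x..x}" for v
  proof (cases "v \<ge> r")
    case True
    then show ?thesis using W_r that by auto
  next
    case False
    then have "W_quad b g (- v) > 0" "g * v \<le> 0"
      using W_r[of "- v"] that r_neg by (auto simp: mult_nonneg_nonpos)
    then show ?thesis
      using W_quad_reflect[of b g v] by linarith
  qed
  show ?thesis
  proof (intro conjI impI)
    assume "g > 0"
    show "r < - x"
    proof (rule ccontr)
      assume "\<not> r < - x"
      interpret W_window b g "- x" x
        using W_sym \<open>g > 0\<close> x by unfold_locales auto
      obtain c where c: "c > 0" "Phi x - Phi (- x) = g * c"
        using Phi_reflect_diff[of x] x by auto
      moreover have "Phi r = Phi x"
        using return_point_iff_Phi_eq[of x r] r r_neg \<open>\<not> r < - x\<close> x by auto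
      moreover have "Phi r \<le> Phi (- x)"
        using Phi_strict_decreasing[of "- x" r] r_neg \<open>\<not> r < - x\<close> by (cases "r = - x") auto
      ultimately show False
        using mult_pos_pos[OF \<open>g > 0\<close> c(1)] by linarith
    qed
  next
    assume "g < 0"
    show "r > - x"
    proof (rule ccontr)
      assume "\<not> r > - x"
      interpret W_window b g r x
        using W_window_of_return_point r x .
      obtain c where c: "c > 0" "Phi x - Phi (- x) = g * c"
        using Phi_reflect_diff[of x] x \<open>\<not> r > - x\<close> by auto
      moreover have "Phi r = Phi x"
        using return_point_iff_Phi_eq[of x r] r r_neg x by auto
      moreover have "Phi (- x) \<le> Phi r"
        using Phi_strict_decreasing[of r "- x"] x \<open>\<not> r > - x\<close> by (cases "r = - x") auto
      ultimately show False
        using mult_neg_pos[OF \<open>g < 0\<close> c(1)] by linarith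
    qed
  next
    assume "g = 0"
    interpret W_window b g "- x" x
      using W_sym \<open>g = 0\<close> x by unfold_locales auto
    obtain c where "Phi x - Phi (- x) = g * c"
      using Phi_reflect_diff[of x] x by auto
    then have "return_point b g x (- x)"
      using return_point_iff_Phi_eq[of x "- x"] \<open>g = 0\<close> x by simp
    then show "r = - x"
      using return_point_unique[OF x r] by simp
  qed
qed

section \<open>Orbits of \<open>Z\<^sup>-\<close>\<close>

locale Zm_orbit =
  fixes b g x :: real and p :: "real \<Rightarrow> real \<times> real"
  assumes orbit_deriv: "\<And>s. (p has_vector_derivative Zm b g (p s)) (at s)"
    and orbit_init: "p 0 = (x, 0)"
begin

definition "X s = fst (p s)"
definition "Y s = snd (p s)"
definition "D s = 1 - b * Y s"
definition "V s = X s - g * Y s"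
definition "P s = (D s)\<^sup>2 - g * D s * V s + b * (V s)\<^sup>2"
definition "u s = V s / D s"

lemma X_deriv: "(X has_real_derivative -1 + b * Y s) (at s)"
  using has_vector_derivative_fst[OF orbit_deriv[of s]] unfolding X_def[abs_def] Y_def
  by (simp add: Zm_def)

lemma Y_deriv: "(Y has_real_derivative - X s + g * Y s) (at s)"
  using has_vector_derivative_snd[OF orbit_deriv[of s]] unfolding X_def Y_def[abs_def]
  by (simp add: Zm_def)

lemma D_deriv: "(D has_real_derivative b * V s) (at s)"
  unfolding D_def[abs_def] V_def by (auto intro!: derivative_eq_intros Y_deriv simp: algebra_simps)

lemma V_deriv: "(V has_real_derivative - D s + g * V s) (at s)"
  unfolding V_def[abs_def] D_def by (auto intro!: derivative_eq_intros X_deriv Y_deriv simp: algebra_simps)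

lemma P_deriv: "(P has_real_derivative g * P s) (at s)"
  unfolding P_def[abs_def]
  by (rule derivative_eq_intros D_deriv V_deriv refl | simp)+ (simp add: algebra_simps power2_eq_square)

lemma X_0: "X 0 = x" and Y_0: "Y 0 = 0" and D_0: "D 0 = 1" and V_0: "V 0 = x" and u_0: "u 0 = x"
  by (simp_all add: X_def Y_def D_def V_def u_def orbit_init)

lemma P_eq: "P s = W_quad b g x * exp (g * s)"
  using linear_ode_eq_exp[of P g s, OF P_deriv] by (simp add: P_def D_0 V_0 W_quad_def power2_eq_square)

lemma W_quad_u: "D s \<noteq> 0 \<Longrightarrow> W_quad b g (u s) = P s / (D s)\<^sup>2"
  unfolding W_quad_def u_def P_def by (simp add: field_simps power2_eq_square)

lemma u_deriv: "D s \<noteq> 0 \<Longrightarrow> (u has_real_derivative - W_quad b g (u s)) (at s)"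
  unfolding u_def[abs_def]
  by (rule derivative_eq_intros V_deriv D_deriv refl | assumption)+
    (simp add: W_quad_def field_simps power2_eq_square)

lemma continuous_on_Y: "continuous_on S Y"
  using Y_deriv by (intro continuous_at_imp_continuous_on ballI) (blast intro: DERIV_isCont)

lemma continuous_on_D: "continuous_on S D"
  using D_deriv by (intro continuous_at_imp_continuous_on ballI) (blast intro: DERIV_isCont)

lemma continuous_on_V: "continuous_on S V"
  using V_deriv by (intro continuous_at_imp_continuous_on ballI) (blast intro: DERIV_isCont)

lemma D_pos:
  assumes W_x: "W_quad b g x > 0" and Y_nonpos: "\<And>s. s \<in> {0..T} \<Longrightarrow> Y s \<le> 0" and s: "s \<in> {0..T}"
  shows "D s > 0"
proof (cases "b \<ge> 0")
  case True
  then show ?thesis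
    using Y_nonpos[OF s] mult_nonneg_nonpos[of b "Y s"] by (simp add: D_def)
next
  case False
  have "D r \<noteq> 0" for r
  proof
    assume "D r = 0"
    then have "P r \<le> 0"
      using False by (simp add: P_def mult_nonpos_nonneg)
    then show False
      using mult_pos_pos[OF W_x exp_gt_zero[of "g * r"]] by (simp add: P_eq)
  qed
  then show ?thesis
    using IVT2'[of D s 0 0, OF _ _ _ continuous_on_D] s D_0 by force
qed

definition Gamma :: "real \<Rightarrow> real" where
  "Gamma s = (if b = 0 then - Y s else ln (D s) / b)"

lemma Gamma_deriv: "D s > 0 \<Longrightarrow> (Gamma has_real_derivative u s) (at s)"
proof (cases "b = 0")
  case True
  have "Gamma = (\<lambda>s. - Y s)" "u s = X s - g * Y s"
    unfolding Gamma_def[abs_def] u_def D_def V_def using True by simp_all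
  then show ?thesis
    by (auto intro!: derivative_eq_intros Y_deriv)
next
  case False
  assume "D s > 0"
  then show ?thesis
    unfolding Gamma_def[abs_def] using False
    by (auto intro!: derivative_eq_intros D_deriv simp: u_def)
qed

context
  fixes t :: real
  assumes t_nonneg: "t \<ge> 0" and W_x: "W_quad b g x > 0"
    and D_pos_on: "\<And>s. s \<in> {0..t} \<Longrightarrow> D s > 0"
begin

lemma W_quad_u_pos: "s \<in> {0..t} \<Longrightarrow> W_quad b g (u s) > 0"
  using D_pos_on[of s] W_x by (simp add: W_quad_u P_eq)

lemma u_strict_decreasing:
  assumes "0 \<le> s1" "s1 < s2" "s2 \<le> t"
  shows "u s2 < u s1"
proof (rule DERIV_neg_imp_decreasing[OF \<open>s1 < s2\<close>])
  fix r assume "s1 \<le> r" "r \<le> s2"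
  then have "r \<in> {0..t}"
    using assms by simp
  then show "\<exists>y. (u has_real_derivative y) (at r) \<and> y < 0"
    using u_deriv[of r] D_pos_on[of r] W_quad_u_pos[of r] by force
qed

lemma continuous_on_u: "continuous_on {0..t} u"
  using u_deriv D_pos_on by (intro continuous_at_imp_continuous_on ballI) (force intro: DERIV_isCont)

lemma u_range:
  assumes "s \<in> {0..t}"
  shows "u s \<in> {u t..x}"
proof -
  have "u t \<le> u s" "u s \<le> x"
    using u_strict_decreasing[of s t] u_strict_decreasing[of 0 s] u_0 assms
    by (cases "s = t"; cases "s = 0"; force)+
  then show ?thesis by simp
qed

lemma W_quad_pos_u_range:
  assumes "v \<in> {u t..x}"
  shows "W_quad b g v > 0"
proof -
  obtain s where "s \<in> {0..t}" "u s = v"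
    using IVT2'[of u t v 0, OF _ _ t_nonneg continuous_on_u] assms u_0 by auto
  then show ?thesis
    using W_quad_u_pos by blast
qed

lemma first_integral: "integral {u t..x} (W_integrand b g) = Gamma t"
proof -
  have cont: "continuous_on {u t..x} (W_integrand b g)"
    using W_quad_pos_u_range by (intro continuous_on_W_integrand) auto
  define h where "h s = integral {u t..u s} (W_integrand b g) + Gamma s" for s
  show ?thesis
  proof (cases "t = 0")
    case True
    then show ?thesis by (simp add: u_0 Gamma_def Y_0 D_0)
  next
    case False
    with t_nonneg have "t > 0" by simp
    have "(h has_real_derivative 0) (at s)" if "0 < s" "s < t" for s
    proof -
      have "u s \<in> {u t<..<x}"
        using u_strict_decreasing[of 0 s] u_strict_decreasing[of s t] that u_0 by auto
      then have "(h has_real_derivative W_integrand b g (u s) * - W_quad b g (u s) + u s) (at s)"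
        unfolding h_def[abs_def] using D_pos_on[of s] that
        by (intro DERIV_add DERIV_chain2[OF integral_has_real_derivative_interior[OF cont]] u_deriv Gamma_deriv) auto
      then show ?thesis
        using W_quad_u_pos[of s] that by (simp add: W_integrand_def)
    qed
    moreover have "continuous_on {0..t} h"
      unfolding h_def
    proof (intro continuous_intros continuous_on_compose2[OF indefinite_integral_continuous_1
          [OF integrable_continuous_interval[OF cont]] continuous_on_u])
      show "continuous_on {0..t} Gamma"
        using Gamma_deriv D_pos_on by (intro continuous_at_imp_continuous_on ballI) (force intro: DERIV_isCont)
    qed (use u_range in auto)
    ultimately have "h t = h 0"
      by (rule DERIV_isconst_end[OF \<open>t > 0\<close>, rotated])
    then show ?thesis
      by (simp add: h_def u_0 Gamma_def Y_0 D_0)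
  qed
qed

end

text \<open>Before returning, the orbit crosses \<open>V = 0\<close>, where \<open>P = D\<^sup>2 \<ge> 0\<close>; and \<open>W(x) = 0\<close>
  would force \<open>V = x D > 0\<close> for all times.\<close>
lemma W_quad_start_pos:
  assumes x: "x > 0" and t: "t > 0" and below: "\<And>s. s \<in> {0<..<t} \<Longrightarrow> Y s < 0" and Y_t: "Y t = 0"
  shows "W_quad b g x > 0"
proof -
  obtain z where z: "0 < z" "z < t" "V z < 0"
  proof -
    obtain l z where z: "t / 2 < z" "z < t" "(Y has_real_derivative l) (at z)" "Y t - Y (t / 2) = (t - t / 2) * l"
      using MVT[of "t / 2" t Y] t continuous_on_Y Y_deriv real_differentiable_def by force
    have "Y (t / 2) < 0"
      using below[of "t / 2"] t by simp
    then have "t * l > 0"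
      using z(4) Y_t by simp
    then have "l > 0"
      using t by (simp add: zero_less_mult_iff)
    then have "V z < 0"
      using DERIV_unique[OF z(3) Y_deriv] by (simp add: V_def)
    moreover have "0 < z"
      using z(1) t by linarith
    ultimately show ?thesis
      using that z(2) by blast
  qed
  obtain s where "0 \<le> s" "s \<le> z" "V s = 0"
    using IVT2'[of V z 0 0, OF _ _ _ continuous_on_V] z V_0 x by auto
  then have "P s \<ge> 0"
    by (simp add: P_def)
  then have "W_quad b g x \<ge> 0"
    by (simp add: P_eq zero_le_mult_iff)
  moreover have "W_quad b g x \<noteq> 0"
  proof
    assume W0: "W_quad b g x = 0"
    define E where "E s = V s - x * D s" for s
    have "(E has_real_derivative (g - b * x) * E s) (at s)" for s
    proof -
      have "g * x - b * x\<^sup>2 = 1"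
        using W0 by (simp add: W_quad_def)
      have "(g - b * x) * E s = g * V s - x * (b * V s) - (g * x - b * x\<^sup>2) * D s"
        by (simp add: E_def algebra_simps power2_eq_square)
      then have "- D s + g * V s - x * (b * V s) = (g - b * x) * E s"
        using \<open>g * x - b * x\<^sup>2 = 1\<close> by simp
      moreover have "(E has_real_derivative - D s + g * V s - x * (b * V s)) (at s)"
        unfolding E_def[abs_def] by (auto intro!: derivative_eq_intros V_deriv D_deriv)
      ultimately show ?thesis
        by simp
    qed
    then have E0: "E s = 0" for s
      using linear_ode_eq_exp[of E "g - b * x" s] by (simp add: E_def V_0 D_0)
    then have "(D has_real_derivative (b * x) * D s) (at s)" for s
      using D_deriv[of s] by (simp add: E_def algebra_simps)
    then have "D s = exp (b * x * s)" for s
      using linear_ode_eq_exp[of D] by (simp add: D_0)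
    then have "V z > 0"
      using E0[of z] x by (simp add: E_def)
    with z show False
      by simp
  qed
  ultimately show ?thesis
    by simp
qed

lemma return_point_of_first_return:
  assumes x: "x > 0" and t: "t > 0" and below: "\<And>s. s \<in> {0<..<t} \<Longrightarrow> Y s < 0" and Y_t: "Y t = 0"
  shows "return_point b g x (X t)"
proof -
  have W_x: "W_quad b g x > 0"
    using W_quad_start_pos[OF assms] .
  have Y_nonpos: "Y s \<le> 0" if "s \<in> {0..t}" for s
    using below[of s] that Y_0 Y_t by (cases "s = 0 \<or> s = t") auto
  have D_pos_on: "D s > 0" if "s \<in> {0..t}" for s
    using D_pos[OF W_x Y_nonpos that] .
  have u_t: "u t = X t"
    by (simp add: u_def D_def V_def Y_t)
  have "integral {X t..x} (W_integrand b g) = 0"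
    using first_integral[of t] t W_x D_pos_on by (simp add: u_t Gamma_def D_def Y_t)
  moreover have W_pos: "\<forall>v\<in>{X t..x}. W_quad b g v > 0"
    using W_quad_pos_u_range[of t] t W_x D_pos_on by (simp add: u_t)
  moreover have "X t < 0"
  proof (rule ccontr)
    assume "\<not> X t < 0"
    have "X t < x"
      using u_strict_decreasing[of t 0 t] t W_x D_pos_on by (simp add: u_t u_0)
    then have "integral {X t..x} (W_integrand b g) > 0"
    proof (rule integral_pos_real[rotated])
      show "continuous_on {X t..x} (W_integrand b g)"
        using W_pos by (intro continuous_on_W_integrand) simp
      fix v assume "X t < v" "v < x"
      then show "W_integrand b g v > 0"
        using W_pos \<open>\<not> X t < 0\<close> by (simp add: W_integrand_def)
    qed
    with \<open>integral {X t..x} (W_integrand b g) = 0\<close> show False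
      by simp
  qed
  ultimately show ?thesis
    by (simp add: return_point_def)
qed

lemma Y_zero_if_Gamma_zero:
  assumes "D s > 0" "Gamma s = 0"
  shows "Y s = 0"
proof (cases "b = 0")
  case False
  then have "D s = 1"
    using assms by (simp add: Gamma_def)
  with False show ?thesis
    by (simp add: D_def)
next
  case True
  then show ?thesis
    using assms(2) unfolding Gamma_def by simp
qed

text \<open>Until it reaches the axis, \<open>u\<close> stays above the return point (by the first integral) while
  decreasing with speed at least \<open>min W > 0\<close>; so the axis is reached in finite time.\<close>
lemma orbit_reaches_axis:
  assumes x: "x > 0" and q: "return_point b g x q"
  obtains T where "T > 0" "Y T \<ge> 0"
proof -
  have q_neg: "q < 0" and W_on: "\<And>v. v \<in> {q..x} \<Longrightarrow> W_quad b g v > 0"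
    and I_q: "integral {q..x} (W_integrand b g) = 0"
    using q by (auto simp: return_point_def)
  have W_x: "W_quad b g x > 0"
    using W_on[of x] q_neg x by simp
  have "\<exists>v0\<in>{q..x}. \<forall>v\<in>{q..x}. W_quad b g v0 \<le> W_quad b g v"
    using q_neg x by (intro continuous_attains_inf continuous_at_imp_continuous_on ballI isCont_W_quad) auto
  then obtain v0 where "v0 \<in> {q..x}" and v0_min: "\<And>v. v \<in> {q..x} \<Longrightarrow> W_quad b g v0 \<le> W_quad b g v"
    by blast
  define m where "m = W_quad b g v0"
  have m: "m > 0"
    using W_on[OF \<open>v0 \<in> {q..x}\<close>] by (simp add: m_def)
  define T where "T = (x - q) / m + 1"
  have T: "T > 0"
    using m q_neg x by (simp add: T_def add_pos_pos)
  have "\<exists>s\<in>{0<..T}. Y s \<ge> 0"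
  proof (rule ccontr)
    assume "\<not> ?thesis"
    then have below: "\<And>s. s \<in> {0<..T} \<Longrightarrow> Y s < 0"
      by (meson not_le)
    have Y_nonpos: "Y s \<le> 0" if "s \<in> {0..T}" for s
      using below[of s] Y_0 that by (cases "s = 0") auto
    have D_pos_on: "D s > 0" if "s \<in> {0..T}" for s
      using D_pos[OF W_x Y_nonpos that] .
    have u_cont: "continuous_on {0..T} u"
      by (rule continuous_on_u) (use T W_x D_pos_on in auto)
    have u_above: "u s > q" if s: "s \<in> {0..T}" for s
    proof (rule ccontr)
      assume "\<not> u s > q"
      then obtain s1 where s1: "0 \<le> s1" "s1 \<le> s" "u s1 = q"
        using IVT2'[of u s q 0, OF _ _ _ continuous_on_subset[OF u_cont]] u_0 q_neg x s by auto
      then have "0 < s1" "s1 \<le> T"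
        using u_0 q_neg x s by (auto intro!: le_neq_trans)
      then have "Gamma s1 = 0"
        using first_integral[of s1] D_pos_on W_x s1 I_q by simp
      then show False
        using Y_zero_if_Gamma_zero[of s1] below[of s1] D_pos_on \<open>0 < s1\<close> \<open>s1 \<le> T\<close> by simp
    qed
    obtain l z where z: "0 < z" "z < T" "(u has_real_derivative l) (at z)" "u T - u 0 = (T - 0) * l"
      using MVT[OF T u_cont] u_deriv D_pos_on real_differentiable_def
      by (metis atLeastAtMost_iff less_eq_real_def less_irrefl)
    have "l = - W_quad b g (u z)"
      using DERIV_unique[OF z(3) u_deriv[of z]] D_pos_on[of z] z by simp
    moreover have "W_quad b g (u z) \<ge> m"
      using v0_min[of "u z"] u_above[of z] u_range[of T z] T W_x D_pos_on z by (auto simp: m_def)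
    then have "T * m \<le> T * W_quad b g (u z)"
      using T by (intro mult_left_mono) auto
    ultimately have "u T \<le> x - T * m"
      using z(4) u_0 by simp
    also have "\<dots> < q"
      using m by (simp add: T_def field_simps)
    finally show False
      using u_above[of T] T by simp
  qed
  then show ?thesis
    using that by auto
qed

lemma pi_ret_of_first_return:
  assumes "t > 0" "\<And>s. s \<in> {0<..<t} \<Longrightarrow> Y s < 0" "Y t = 0"
  shows "pi_ret b g x (X t)"
  unfolding pi_ret_def
proof (intro exI conjI)
  show "\<forall>s. (p has_vector_derivative Zm b g (p s)) (at s)"
    using orbit_deriv by blast
  show "\<forall>s\<in>{0<..<t}. snd (p s) < 0"
    using assms(2) by (simp add: Y_def)
  show "p t = (X t, 0)"
    using assms(3) by (simp add: X_def Y_def prod_eq_iff)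
qed (use assms orbit_init in auto)

lemma first_return_exists:
  assumes x: "x > 0" and T: "T > 0" "Y T \<ge> 0"
  obtains t where "t > 0" "\<And>s. s \<in> {0<..<t} \<Longrightarrow> Y s < 0" "Y t = 0"
proof -
  have "(Y has_real_derivative - x) (at 0)"
    using Y_deriv[of 0] by (simp add: X_0 Y_0)
  then show ?thesis
    using first_zero_after_decrease[OF T(1) continuous_on_Y Y_0 _ _ T(2)] x that by force
qed

lemma pi_ret_of_return_point:
  assumes x: "x > 0" and q: "return_point b g x q"
  shows "pi_ret b g x q"
proof -
  obtain T where "T > 0" "Y T \<ge> 0"
    using orbit_reaches_axis[OF x q] .
  then obtain t where t: "t > 0" "\<And>s. s \<in> {0<..<t} \<Longrightarrow> Y s < 0" "Y t = 0"
    using first_return_exists[OF x] by blast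
  then have "X t = q"
    using return_point_unique[OF x return_point_of_first_return[OF x t] q] by simp
  with pi_ret_of_first_return[OF t] show ?thesis
    by simp
qed

end

text \<open>\<open>Zm\<close> is affine, so affine combinations of its orbits are orbits; a time-shifted copy of one
  returning orbit thus yields an orbit through any prescribed point of the axis.\<close>
lemma Zm_orbit_affine_comb:
  assumes "Zm_orbit b g x p" and p_t: "p t = (r, 0)" and "r \<noteq> x"
  shows "Zm_orbit b g x' (\<lambda>s. p s + ((x' - x) / (r - x)) *\<^sub>R (p (s + t) - p s))"
proof
  interpret Zm_orbit b g x p by fact
  define c where "c = (x' - x) / (r - x)"
  fix s
  have shifted: "((\<lambda>s. p (s + t)) has_vector_derivative Zm b g (p (s + t))) (at s)"
  proof -
    have "((\<lambda>s. s + t) has_vector_derivative 1) (at s)"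
      by (auto intro!: derivative_eq_intros simp: has_real_derivative_iff_has_vector_derivative[symmetric])
    from vector_diff_chain_at[OF this orbit_deriv] show ?thesis
      by (simp add: o_def)
  qed
  have "((\<lambda>s. p s + c *\<^sub>R (p (s + t) - p s)) has_vector_derivative
      Zm b g (p s) + c *\<^sub>R (Zm b g (p (s + t)) - Zm b g (p s))) (at s)"
    by (intro has_vector_derivative_add orbit_deriv bounded_linear.has_vector_derivative[OF
          bounded_linear_scaleR_right] has_vector_derivative_diff shifted)
  moreover have "Zm b g (p s) + c *\<^sub>R (Zm b g (p (s + t)) - Zm b g (p s)) =
      Zm b g (p s + c *\<^sub>R (p (s + t) - p s))"
    by (simp add: Zm_def algebra_simps)
  ultimately show "((\<lambda>s. p s + ((x' - x) / (r - x)) *\<^sub>R (p (s + t) - p s)) has_vector_derivative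
      Zm b g (p s + ((x' - x) / (r - x)) *\<^sub>R (p (s + t) - p s))) (at s)"
    by (simp add: c_def)
next
  interpret Zm_orbit b g x p by fact
  show "p 0 + ((x' - x) / (r - x)) *\<^sub>R (p (0 + t) - p 0) = (x', 0)"
    using orbit_init p_t \<open>r \<noteq> x\<close> by (simp add: field_simps)
qed

lemma return_point_of_pi_ret:
  assumes x: "x > 0" and "pi_ret b g x q"
  shows "return_point b g x q"
proof -
  obtain p t where "Zm_orbit b g x p" and t: "t > 0" "\<forall>s\<in>{0<..<t}. snd (p s) < 0" "p t = (q, 0)"
    using assms(2) unfolding pi_ret_def by (auto intro: Zm_orbit.intro)
  interpret Zm_orbit b g x p by fact
  show ?thesis
    using return_point_of_first_return[OF x t(1)] t by (simp add: X_def Y_def)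
qed

lemma pi_ret_iff_return_point:
  assumes "pi_ret b g x0 r0" "x0 > 0" "x > 0"
  shows "pi_ret b g x q \<longleftrightarrow> return_point b g x q"
proof
  assume "return_point b g x q"
  obtain p t where "Zm_orbit b g x0 p" "p t = (r0, 0)"
    using assms(1) unfolding pi_ret_def by (auto intro: Zm_orbit.intro)
  moreover have "r0 \<noteq> x0"
    using return_point_of_pi_ret[OF assms(2,1)] assms(2) by (auto simp: return_point_def)
  ultimately interpret Zm_orbit b g x "\<lambda>s. p s + ((x - x0) / (r0 - x0)) *\<^sub>R (p (s + t) - p s)"
    by (rule Zm_orbit_affine_comb)
  show "pi_ret b g x q"
    by (rule pi_ret_of_return_point) fact+
qed (rule return_point_of_pi_ret[OF assms(3)])

lemma Pi_map_eq:
  assumes x: "x > 0" and "pi_ret b g x q"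
  shows "Pi_map b g x = q"
proof -
  have "(THE u. pi_ret b g x u) = q"
    using assms return_point_unique[OF x] return_point_of_pi_ret[OF x] by blast
  with x show ?thesis
    by (simp add: Pi_map_def)
qed

section \<open>Regularity of the half-map\<close>

context W_window
begin

lemma Pi_map_near:
  assumes x: "0 < x" "x < hi" and lo_r: "lo < Pi_map b g x" and ret: "pi_ret b g x (Pi_map b g x)"
  obtains \<delta> where "\<delta> > 0"
    "\<And>y. y \<in> ball x \<delta> \<Longrightarrow> 0 < y \<and> y < hi \<and> Pi_map b g y \<in> {lo<..<0} \<and> Phi (Pi_map b g y) = Phi y"
proof -
  define r where "r = Pi_map b g x"
  have "return_point b g x r"
    using return_point_of_pi_ret[OF x(1) ret] by (simp add: r_def)
  then have r_neg: "r < 0" and "Phi r = Phi x"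
    using return_point_iff_Phi_eq[of x r] x lo_r by (auto simp: r_def return_point_def)
  moreover have "Phi r < 0"
    using Phi_strict_decreasing[of lo r] lo_r r_neg Phi_lo by (simp add: r_def)
  moreover have "isCont Phi x"
    using Phi_deriv[of x] x lo_neg DERIV_isCont by simp
  ultimately have "\<forall>\<^sub>F y in at x. Phi y < 0"
    by (auto simp: isCont_def dest: order_tendstoD(2))
  then obtain \<delta>1 where "\<delta>1 > 0" and \<delta>1: "\<And>y. y \<noteq> x \<Longrightarrow> dist y x < \<delta>1 \<Longrightarrow> Phi y < 0"
    unfolding eventually_at by auto
  define \<delta> where "\<delta> = min \<delta>1 (min x (hi - x))"
  have "0 < y \<and> y < hi \<and> Pi_map b g y \<in> {lo<..<0} \<and> Phi (Pi_map b g y) = Phi y" if "y \<in> ball x \<delta>" for y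
  proof -
    have y: "0 < y" "y < hi"
      using that by (auto simp: \<delta>_def dist_real_def)
    have "Phi y < 0"
      using \<delta>1[of y] that \<open>Phi r = Phi x\<close> \<open>Phi r < 0\<close> by (cases "y = x") (auto simp: \<delta>_def dist_commute)
    moreover have "Phi 0 < Phi y"
      using Phi_strict_increasing[of 0 y] y by simp
    ultimately obtain q where q: "lo \<le> q" "q \<le> 0" "Phi q = Phi y"
      using IVT2'[of Phi 0 "Phi y" lo, OF _ _ _ continuous_on_subset[OF Phi_cont]] Phi_lo lo_neg hi_pos
      by auto
    then have q': "q \<noteq> lo" "q \<noteq> 0"
      using \<open>Phi y < 0\<close> \<open>Phi 0 < Phi y\<close> Phi_lo by auto
    then have "return_point b g y q"
      using return_point_iff_Phi_eq[of y q] q y by simp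
    then have "Pi_map b g y = q"
      using Pi_map_eq pi_ret_iff_return_point[OF ret x(1) y(1)] y(1) by blast
    then show ?thesis
      using q q' y by auto
  qed
  moreover have "\<delta> > 0"
    using \<open>\<delta>1 > 0\<close> x by (simp add: \<delta>_def)
  ultimately show ?thesis
    using that by blast
qed

lemma Pi_map_deriv_window:
  assumes x: "0 < x" "x < hi" and lo_r: "lo < Pi_map b g x" and ret: "pi_ret b g x (Pi_map b g x)"
  shows "(Pi_map b g has_real_derivative W_integrand b g x / W_integrand b g (Pi_map b g x)) (at x)"
proof -
  define r where "r = Pi_map b g x"
  obtain \<delta> where "\<delta> > 0" and near:
    "\<And>y. y \<in> ball x \<delta> \<Longrightarrow> 0 < y \<and> y < hi \<and> Pi_map b g y \<in> {lo<..<0} \<and> Phi (Pi_map b g y) = Phi y"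
    using Pi_map_near[OF assms] by blast
  have r_in: "r \<in> {lo<..<0}" and "Phi r = Phi x"
    using near[of x] \<open>\<delta> > 0\<close> by (auto simp: r_def)
  define ginv where "ginv w = (THE q. q \<in> {lo<..<0} \<and> Phi q = w)" for w
  have ginv: "ginv (Phi z) = z" if "z \<in> {lo<..<0}" for z
    unfolding ginv_def
  proof (rule the_equality)
    fix q assume "q \<in> {lo<..<0} \<and> Phi q = Phi z"
    with that show "q = z"
      using Phi_strict_decreasing[of q z] Phi_strict_decreasing[of z q] by (cases q z rule: linorder_cases) auto
  qed (use that in simp)
  have "W_integrand b g r \<noteq> 0"
    using W_pos[of r] r_in hi_pos by (simp add: W_integrand_def)
  then have "(ginv has_real_derivative inverse (W_integrand b g r)) (at (Phi r))"
    using r_in hi_pos ginv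
    by (intro DERIV_inverse_function_open[where S = "{lo<..<0}"] continuous_on_subset[OF Phi_cont]
        Phi_deriv) auto
  then have "((\<lambda>y. ginv (Phi y)) has_real_derivative inverse (W_integrand b g r) * W_integrand b g x) (at x)"
    using \<open>Phi r = Phi x\<close> x lo_neg by (intro DERIV_chain2[OF _ Phi_deriv]) auto
  then have "(Pi_map b g has_real_derivative inverse (W_integrand b g r) * W_integrand b g x) (at x)"
  proof (rule has_field_derivative_transform_within_open)
    show "ginv (Phi y) = Pi_map b g y" if "y \<in> ball x \<delta>" for y
      using near[OF that] ginv by metis
  qed (use \<open>\<delta> > 0\<close> in simp_all)
  then show ?thesis
    by (simp add: r_def divide_inverse mult.commute)
qed

lemma integral_Pi_map_deriv:
  assumes x: "0 < x" "x < hi" and lo_r: "lo < Pi_map b g x" and ret: "pi_ret b g x (Pi_map b g x)"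
    and h: "continuous_on {lo..hi} h"
  shows "((\<lambda>y. integral {Pi_map b g y..y} h) has_real_derivative
      h x - h (Pi_map b g x) * (W_integrand b g x / W_integrand b g (Pi_map b g x))) (at x)"
proof -
  define G where "G v = integral {lo..v} h" for v
  have G_deriv: "(G has_real_derivative h v) (at v)" if "lo < v" "v < hi" for v
    unfolding G_def[abs_def] by (rule integral_has_real_derivative_interior[OF h that])
  obtain \<delta> where "\<delta> > 0" and near:
    "\<And>y. y \<in> ball x \<delta> \<Longrightarrow> 0 < y \<and> y < hi \<and> Pi_map b g y \<in> {lo<..<0} \<and> Phi (Pi_map b g y) = Phi y"
    using Pi_map_near[OF assms(1-4)] by blast
  have "Pi_map b g x \<in> {lo<..<0}"
    using near[of x] \<open>\<delta> > 0\<close> by simp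
  then have "((\<lambda>y. G y - G (Pi_map b g y)) has_real_derivative
      h x - h (Pi_map b g x) * (W_integrand b g x / W_integrand b g (Pi_map b g x))) (at x)"
    using x lo_neg hi_pos
    by (intro DERIV_diff G_deriv DERIV_chain2[OF G_deriv Pi_map_deriv_window[OF assms(1-4)]]) auto
  then show ?thesis
  proof (rule has_field_derivative_transform_within_open)
    fix y assume "y \<in> ball x \<delta>"
    then have "lo \<le> Pi_map b g y" "Pi_map b g y \<le> y" "y \<le> hi"
      using near[of y] by auto
    then show "G y - G (Pi_map b g y) = integral {Pi_map b g y..y} h"
      using integral_combine_continuous[OF continuous_on_subset[OF h], where a = lo and c = "Pi_map b g y" and b = y]
      by (simp add: G_def)
  qed (use \<open>\<delta> > 0\<close> in simp_all)
qed

lemma Pi_map_tendsto_zero: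
  assumes "0 < x1" "x1 \<le> hi"
    and ret: "\<And>y. 0 < y \<Longrightarrow> y \<le> x1 \<Longrightarrow> return_point b g y (Pi_map b g y) \<and> lo \<le> Pi_map b g y"
  shows "(Pi_map b g \<longlongrightarrow> 0) (at_right 0)"
proof (rule tendstoI)
  fix e :: real assume "e > 0"
  define e' where "e' = min (e / 2) (- lo / 2)"
  have e': "0 < e'" "e' < e" "lo < - e'"
    using \<open>e > 0\<close> lo_neg by (auto simp: e'_def min_def)
  have "Phi 0 < Phi (- e')"
    using Phi_strict_decreasing[of "- e'" 0] e' by simp
  moreover have "isCont Phi 0"
    using Phi_deriv[of 0] lo_neg hi_pos DERIV_isCont by simp
  ultimately have "\<forall>\<^sub>F y in at_right 0. Phi y < Phi (- e')"
    by (intro order_tendstoD(2)) (auto simp: isCont_def filterlim_at_split)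
  moreover have "\<forall>\<^sub>F y in at_right 0. 0 < y \<and> y \<le> x1"
    unfolding eventually_at_right_field using assms(1) by (intro exI[of _ x1]) auto
  ultimately show "\<forall>\<^sub>F y in at_right 0. dist (Pi_map b g y) 0 < e"
  proof eventually_elim
    case (elim y)
    then have "return_point b g y (Pi_map b g y)" "lo \<le> Pi_map b g y"
      using ret by auto
    then have "Phi (Pi_map b g y) = Phi y" "Pi_map b g y < 0"
      using return_point_iff_Phi_eq[of y] elim assms(2) by (auto simp: return_point_def)
    moreover have "- e' < Pi_map b g y"
    proof (rule ccontr)
      assume "\<not> - e' < Pi_map b g y"
      then have "Phi (- e') \<le> Phi (Pi_map b g y)"
        using Phi_strict_decreasing[of "Pi_map b g y" "- e'"] \<open>lo \<le> Pi_map b g y\<close> e'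
        by (cases "Pi_map b g y = - e'") auto
      then show False
        using elim calculation by simp
    qed
    ultimately show ?case
      using e' by (simp add: dist_real_def)
  qed
qed

end

lemma Pi_map_0: "Pi_map b g 0 = 0"
  by (simp add: Pi_map_def)

lemma isCont_Xsl: "isCont (Xsl B ap dp) v"
  unfolding Xsl_def[abs_def] divide_inverse by (intro continuous_intros)

lemma open_int_pos: "x \<in> open_int B ap dp bm gm \<Longrightarrow> x > 0"
  by (simp add: open_int_def)

lemma open_int_downward_closed:
  "x \<in> open_int B ap dp bm gm \<Longrightarrow> 0 < y \<Longrightarrow> y \<le> x \<Longrightarrow> y \<in> open_int B ap dp bm gm"
  by (auto simp: open_int_def)

lemma pi_ret_Pi_map:
  assumes "x \<in> open_int B ap dp bm gm"
  shows "pi_ret bm gm x (Pi_map bm gm x)"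
proof -
  have "x > 0" "x \<in> good_set B ap dp bm gm"
    using assms by (auto simp: open_int_def)
  then obtain q where "pi_ret bm gm x q"
    by (auto simp: good_set_def Pi_dom_def)
  with Pi_map_eq[OF \<open>x > 0\<close> this] show ?thesis
    by simp
qed

lemma return_point_Pi_map:
  "x \<in> open_int B ap dp bm gm \<Longrightarrow> return_point bm gm x (Pi_map bm gm x)"
  using return_point_of_pi_ret[OF open_int_pos pi_ret_Pi_map] .

lemma Xsl_pos_open_int:
  assumes "x \<in> open_int B ap dp bm gm" "v \<in> {Pi_map bm gm x..x}"
  shows "Xsl B ap dp v > 0"
proof -
  have "x \<in> good_set B ap dp bm gm"
    using assms(1) by (auto simp: open_int_def)
  with assms(2) show ?thesis
    by (auto simp: good_set_def)
qed

lemma open_int_window: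
  assumes x: "x \<in> open_int B ap dp bm gm"
  obtains lo hi where "lo < Pi_map bm gm x" "x < hi" "W_window bm gm lo hi"
    "\<And>v. v \<in> {lo..hi} \<Longrightarrow> Xsl B ap dp v > 0"
proof -
  define r where "r = Pi_map bm gm x"
  have r: "r < 0" "\<And>v. v \<in> {r..x} \<Longrightarrow> W_quad bm gm v > 0"
    using return_point_Pi_map[OF x] by (auto simp: r_def return_point_def)
  have "isCont (\<lambda>v. min (W_quad bm gm v) (Xsl B ap dp v)) v" for v
    by (intro continuous_intros isCont_W_quad isCont_Xsl)
  then obtain \<epsilon> where "\<epsilon> > 0" and \<epsilon>: "\<And>v. v \<in> {r - \<epsilon>..x + \<epsilon>} \<Longrightarrow> min (W_quad bm gm v) (Xsl B ap dp v) > 0"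
    using pos_on_Icc_extends[of "\<lambda>v. min (W_quad bm gm v) (Xsl B ap dp v)" r x] r
      Xsl_pos_open_int[OF x] open_int_pos[OF x] by (auto simp: r_def)
  show ?thesis
  proof (rule that[of "r - \<epsilon>" "x + \<epsilon>"])
    show "W_window bm gm (r - \<epsilon>) (x + \<epsilon>)"
      using \<epsilon> \<open>\<epsilon> > 0\<close> r(1) open_int_pos[OF x] by unfold_locales auto
  qed (use \<epsilon> \<open>\<epsilon> > 0\<close> in \<open>auto simp: r_def\<close>)
qed

definition Pi_slope :: "real \<Rightarrow> real \<Rightarrow> real \<Rightarrow> real" where
  "Pi_slope b g x = x * W_quad b g (Pi_map b g x) / (Pi_map b g x * W_quad b g x)"

lemma Pi_map_deriv:
  assumes x: "x \<in> open_int B ap dp bm gm"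
  shows "(Pi_map bm gm has_real_derivative Pi_slope bm gm x) (at x)"
proof -
  define r where "r = Pi_map bm gm x"
  obtain lo hi where "lo < r" "x < hi" "W_window bm gm lo hi"
    using open_int_window[OF x] unfolding r_def by metis
  then interpret W_window bm gm lo hi by simp
  have "W_quad bm gm r > 0" "W_quad bm gm x > 0" "r < 0"
    using return_point_Pi_map[OF x] open_int_pos[OF x] by (auto simp: r_def return_point_def)
  then show ?thesis
    using Pi_map_deriv_window[OF open_int_pos[OF x] \<open>x < hi\<close> _ pi_ret_Pi_map[OF x]] \<open>lo < r\<close>
    by (simp add: r_def W_integrand_def Pi_slope_def field_simps)
qed

section \<open>Zeros of the slow divergence integral\<close>

definition slow_integral :: "real \<Rightarrow> real \<Rightarrow> real \<Rightarrow> real \<Rightarrow> real \<Rightarrow> real \<Rightarrow> real" where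
  "slow_integral B ap dp bm gm x = integral {Pi_map bm gm x..x} (\<lambda>u. u / Xsl B ap dp u)"

text \<open>With \<open>r = \<Pi>(y)\<close>: \<open>(y - r) ell(y) = (1 + \<delta>\<^sub>+) (W(y) X\<^sup>s\<^sup>l(r) - W(r) X\<^sup>s\<^sup>l(y))\<close>.\<close>
definition ell :: "real \<Rightarrow> real \<Rightarrow> real \<Rightarrow> real \<Rightarrow> real \<Rightarrow> real \<Rightarrow> real" where
  "ell B ap dp bm gm y =
     ap * bm * y * Pi_map bm gm y + bm * (B - dp) * (y + Pi_map bm gm y) - (ap + (B - dp) * gm)"

lemma W_quad_Xsl_cross:
  assumes "1 + dp \<noteq> 0"
  shows "W_quad b g y * Xsl B a dp r - W_quad b g r * Xsl B a dp y =
    (y - r) * (a * b * y * r + b * (B - dp) * (y + r) - (a + (B - dp) * g)) / (1 + dp)"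
proof -
  have "W_quad b g y * (B - dp + a * r) - W_quad b g r * (B - dp + a * y) =
      (y - r) * (a * b * y * r + b * (B - dp) * (y + r) - (a + (B - dp) * g))"
    unfolding W_quad_def power2_eq_square by algebra
  then show ?thesis
    using assms unfolding Xsl_def by (simp add: diff_divide_distrib[symmetric])
qed

lemma slow_integral_0: "slow_integral B ap dp bm gm 0 = 0"
  by (simp add: slow_integral_def Pi_map_0)

lemma slow_integral_deriv:
  assumes dp: "dp > 0" and x: "x \<in> open_int B ap dp bm gm"
  obtains C where "C > 0" "(slow_integral B ap dp bm gm has_real_derivative C * ell B ap dp bm gm x) (at x)"
proof -
  define r where "r = Pi_map bm gm x"
  obtain lo hi where "lo < r" "x < hi" "W_window bm gm lo hi" and Xsl_pos: "\<And>v. v \<in> {lo..hi} \<Longrightarrow> Xsl B ap dp v > 0"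
    using open_int_window[OF x] unfolding r_def by metis
  then interpret W_window bm gm lo hi by simp
  have x_pos: "x > 0" and r_neg: "r < 0" and W: "W_quad bm gm r > 0" "W_quad bm gm x > 0"
    using return_point_Pi_map[OF x] open_int_pos[OF x] by (auto simp: r_def return_point_def)
  have X: "Xsl B ap dp r > 0" "Xsl B ap dp x > 0"
    using Xsl_pos_open_int[OF x] x_pos r_neg by (auto simp: r_def)
  have "continuous_on {lo..hi} (\<lambda>u. u / Xsl B ap dp u)"
    using Xsl_pos by (intro continuous_intros continuous_at_imp_continuous_on ballI isCont_Xsl) force
  from integral_Pi_map_deriv[OF x_pos \<open>x < hi\<close> _ pi_ret_Pi_map[OF x] this] \<open>lo < r\<close>
  have "(slow_integral B ap dp bm gm has_real_derivative
      x / Xsl B ap dp x - r / Xsl B ap dp r * (W_integrand bm gm x / W_integrand bm gm r)) (at x)"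
    by (simp add: slow_integral_def[abs_def] r_def)
  also have "x / Xsl B ap dp x - r / Xsl B ap dp r * (W_integrand bm gm x / W_integrand bm gm r) =
      x * (W_quad bm gm x * Xsl B ap dp r - W_quad bm gm r * Xsl B ap dp x) /
      (Xsl B ap dp x * Xsl B ap dp r * W_quad bm gm x)"
    using W X r_neg by (simp add: W_integrand_def field_simps)
  also have "\<dots> = x * (x - r) / ((1 + dp) * Xsl B ap dp x * Xsl B ap dp r * W_quad bm gm x) *
      ell B ap dp bm gm x"
    using dp by (simp add: W_quad_Xsl_cross ell_def r_def)
  finally show ?thesis
    using W X x_pos r_neg dp by (intro that[of "x * (x - r) / ((1 + dp) * Xsl B ap dp x * Xsl B ap dp r *
        W_quad bm gm x)"]) (simp_all add: zero_less_mult_iff)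
qed

lemma continuous_on_Pi_map:
  assumes x1: "x1 \<in> open_int B ap dp bm gm" and lo: "lo < Pi_map bm gm x1" and "x1 < hi"
    and "W_window bm gm lo hi"
  shows "continuous_on {0..x1} (Pi_map bm gm)"
proof -
  interpret W_window bm gm lo hi by fact
  have "(Pi_map bm gm \<longlongrightarrow> 0) (at_right 0)"
  proof (rule Pi_map_tendsto_zero)
    fix y assume y: "0 < y" "y \<le> x1"
    then have ret: "return_point bm gm y (Pi_map bm gm y)"
      using return_point_Pi_map[OF open_int_downward_closed[OF x1]] by simp
    moreover have "Pi_map bm gm x1 \<le> Pi_map bm gm y"
      using return_point_antimono[OF y(1) _ ret return_point_Pi_map[OF x1]] y by (cases "y = x1") auto
    ultimately show "return_point bm gm y (Pi_map bm gm y) \<and> lo \<le> Pi_map bm gm y"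
      using lo by simp
  qed (use open_int_pos[OF x1] \<open>x1 < hi\<close> in auto)
  then have "continuous (at 0 within {0..x1}) (Pi_map bm gm)"
    using open_int_pos[OF x1] by (simp add: continuous_within at_within_Icc_at_right Pi_map_0)
  moreover have "isCont (Pi_map bm gm) y" if "0 < y" "y \<le> x1" for y
    using Pi_map_deriv[OF open_int_downward_closed[OF x1 that]] DERIV_isCont by blast
  ultimately show ?thesis
    unfolding continuous_on_eq_continuous_within
    by (metis atLeastAtMost_iff continuous_at_imp_continuous_at_within order_le_less)
qed

lemma continuous_on_slow_integral:
  assumes x1: "x1 \<in> open_int B ap dp bm gm"
  shows "continuous_on {0..x1} (slow_integral B ap dp bm gm)"
proof -
  obtain lo hi where lo: "lo < Pi_map bm gm x1" and "x1 < hi" "W_window bm gm lo hi"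
    and Xsl_pos: "\<And>v. v \<in> {lo..hi} \<Longrightarrow> Xsl B ap dp v > 0"
    using open_int_window[OF x1] by metis
  have Pi_range: "Pi_map bm gm y \<in> {lo..y}" if "y \<in> {0..x1}" for y
  proof (cases "y = 0")
    case False
    then have "0 < y"
      using that by simp
    have ret: "return_point bm gm y (Pi_map bm gm y)"
      using return_point_Pi_map[OF open_int_downward_closed[OF x1 \<open>0 < y\<close>]] that by simp
    have "Pi_map bm gm x1 \<le> Pi_map bm gm y"
      using return_point_antimono[OF \<open>0 < y\<close> _ ret return_point_Pi_map[OF x1]] that
      by (cases "y = x1") auto
    moreover have "Pi_map bm gm y < 0"
      using ret by (simp add: return_point_def)
    ultimately show ?thesis
      using lo \<open>0 < y\<close> by simp
  qed (use lo return_point_Pi_map[OF x1] in \<open>auto simp: Pi_map_0 return_point_def\<close>)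
  define h where "h u = u / Xsl B ap dp u" for u
  have h: "continuous_on {lo..hi} h"
    unfolding h_def using Xsl_pos
    by (intro continuous_intros continuous_at_imp_continuous_on ballI isCont_Xsl) force
  define G where "G v = integral {lo..v} h" for v
  have G: "continuous_on {lo..hi} G"
    unfolding G_def by (rule indefinite_integral_continuous_1[OF integrable_continuous_interval[OF h]])
  have "Pi_map bm gm ` {0..x1} \<subseteq> {lo..hi}"
    using Pi_range \<open>x1 < hi\<close> by force
  then have "continuous_on {0..x1} (\<lambda>y. G y - G (Pi_map bm gm y))"
    using lo return_point_Pi_map[OF x1] \<open>x1 < hi\<close>
    by (intro continuous_intros continuous_on_subset[OF G] continuous_on_compose2[OF G
          continuous_on_Pi_map[OF x1 lo \<open>x1 < hi\<close> \<open>W_window bm gm lo hi\<close>]])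
      (auto simp: return_point_def)
  moreover have "G y - G (Pi_map bm gm y) = slow_integral B ap dp bm gm y" if "y \<in> {0..x1}" for y
    using integral_combine_continuous[OF continuous_on_subset[OF h], where a = lo and c = "Pi_map bm gm y" and b = y]
      Pi_range[OF that] that \<open>x1 < hi\<close>
    by (simp add: G_def slow_integral_def h_def[abs_def])
  ultimately show ?thesis
    by (rule continuous_on_eq)
qed

lemma Xsl_times: "1 + dp \<noteq> 0 \<Longrightarrow> (1 + dp) * Xsl B ap dp v = B - dp + ap * v"
  by (simp add: Xsl_def)

lemma ell_deriv:
  assumes dp: "1 + dp \<noteq> 0" and x: "x \<in> open_int B ap dp bm gm"
  shows "(ell B ap dp bm gm has_real_derivative
      bm * (1 + dp) * (Xsl B ap dp (Pi_map bm gm x) + Xsl B ap dp x * Pi_slope bm gm x)) (at x)"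
proof -
  have "bm * (1 + dp) * (Xsl B ap dp (Pi_map bm gm x) + Xsl B ap dp x * Pi_slope bm gm x) =
      bm * ((1 + dp) * Xsl B ap dp (Pi_map bm gm x) + ((1 + dp) * Xsl B ap dp x) * Pi_slope bm gm x)"
    by (simp add: algebra_simps)
  also have "\<dots> = bm * ((B - dp + ap * Pi_map bm gm x) + (B - dp + ap * x) * Pi_slope bm gm x)"
    by (simp only: Xsl_times[OF dp])
  also have "\<dots> = ap * bm * (Pi_map bm gm x + x * Pi_slope bm gm x) + bm * (B - dp) * (1 + Pi_slope bm gm x)"
    by (simp add: algebra_simps)
  finally show ?thesis
    unfolding ell_def[abs_def] by (auto intro!: derivative_eq_intros Pi_map_deriv[OF x] simp: algebra_simps)
qed

lemma ell_transversal:
  assumes dp: "dp > 0" and "bm \<noteq> 0" "gm \<noteq> 0" and x: "x \<in> open_int B ap dp bm gm"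
    and ell_x: "ell B ap dp bm gm x = 0"
  shows "bm * gm * (bm * (1 + dp) * (Xsl B ap dp (Pi_map bm gm x) + Xsl B ap dp x * Pi_slope bm gm x)) > 0"
proof -
  define r where "r = Pi_map bm gm x"
  have x_pos: "x > 0" and r_neg: "r < 0" and W: "W_quad bm gm r > 0" "W_quad bm gm x > 0"
    using return_point_Pi_map[OF x] open_int_pos[OF x] by (auto simp: r_def return_point_def)
  have X: "Xsl B ap dp r > 0" "Xsl B ap dp x > 0"
    using Xsl_pos_open_int[OF x] x_pos r_neg by (auto simp: r_def)
  have cross: "W_quad bm gm r * Xsl B ap dp x = W_quad bm gm x * Xsl B ap dp r"
    using W_quad_Xsl_cross[of dp bm gm x B ap r] ell_x dp by (simp add: ell_def r_def)
  have "Xsl B ap dp x * Pi_slope bm gm x = x * (W_quad bm gm r * Xsl B ap dp x) / (r * W_quad bm gm x)"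
    by (simp add: Pi_slope_def r_def)
  also have "\<dots> = x * Xsl B ap dp r / r"
    using W by (simp add: cross)
  finally have eq: "bm * gm * (bm * (1 + dp) * (Xsl B ap dp r + Xsl B ap dp x * Pi_slope bm gm x)) =
      (bm * bm) * (1 + dp) * Xsl B ap dp r * (gm * (r + x) / r)"
    using r_neg by (simp add: field_simps)
  have sign: "gm * (r + x) / r > 0"
  proof (cases "gm > 0")
    case True
    then have "r + x < 0"
      using return_point_sign[OF x_pos return_point_Pi_map[OF x]] by (simp add: r_def)
    then show ?thesis
      using True r_neg by (simp add: zero_less_divide_iff mult_pos_neg)
  next
    case False
    then have "gm < 0" "r + x > 0"
      using return_point_sign[OF x_pos return_point_Pi_map[OF x]] \<open>gm \<noteq> 0\<close> by (auto simp: r_def)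
    then show ?thesis
      using r_neg by (simp add: zero_less_divide_iff mult_neg_pos)
  qed
  have "bm * bm > 0" "1 + dp > 0"
    using \<open>bm \<noteq> 0\<close> dp by (simp_all add: zero_less_mult_iff linorder_neq_iff disj_commute)
  then have "(bm * bm) * (1 + dp) * Xsl B ap dp r * (gm * (r + x) / r) > 0"
    using X(1) sign by (metis mult_pos_pos)
  then show ?thesis
    unfolding r_def[symmetric] eq .
qed

lemma ell_nonzero_degenerate:
  assumes cond: "sdi_cond bm gm B ap dp" and "bm = 0 \<or> gm = 0" and y: "y \<in> open_int B ap dp bm gm"
  shows "ell B ap dp bm gm y \<noteq> 0"
proof (cases "bm = 0")
  case True
  then show ?thesis
    using cond by (simp add: sdi_cond_def ell_def algebra_simps)
next
  case False
  then have "gm = 0" "ap \<noteq> 0"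
    using assms by (auto simp: sdi_cond_def)
  have "Pi_map bm gm y = - y"
    using return_point_sign[OF open_int_pos[OF y] return_point_Pi_map[OF y]] \<open>gm = 0\<close> by simp
  then have "ell B ap dp bm gm y = - ap * W_quad bm gm y"
    by (simp add: ell_def W_quad_def \<open>gm = 0\<close> algebra_simps power2_eq_square)
  moreover have "W_quad bm gm y > 0"
    using return_point_Pi_map[OF y] open_int_pos[OF y] by (auto simp: return_point_def)
  ultimately show ?thesis
    using \<open>ap \<noteq> 0\<close> by simp
qed

lemma ell_zero_unique:
  assumes dp: "dp > 0" and cond: "sdi_cond bm gm B ap dp"
    and x: "x \<in> open_int B ap dp bm gm" and y: "y \<in> open_int B ap dp bm gm" and "x \<le> y"
    and "ell B ap dp bm gm x = 0" "ell B ap dp bm gm y = 0"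
  shows "x = y"
proof (cases "bm = 0 \<or> gm = 0")
  case True
  then show ?thesis
    using ell_nonzero_degenerate[OF cond True x] assms by simp
next
  case False
  have in_open_int: "s \<in> open_int B ap dp bm gm" if "s \<in> {x..y}" for s
    using open_int_downward_closed[OF y] open_int_pos[OF x] that by auto
  show ?thesis
  proof (rule zero_unique_if_transversal[where f = "\<lambda>s. bm * gm * ell B ap dp bm gm s"])
    show "((\<lambda>s. bm * gm * ell B ap dp bm gm s) has_real_derivative
        bm * gm * (bm * (1 + dp) * (Xsl B ap dp (Pi_map bm gm s) + Xsl B ap dp s * Pi_slope bm gm s))) (at s)"
      if "s \<in> {x..y}" for s
      using dp by (intro DERIV_cmult ell_deriv in_open_int[OF that]) simp
  qed (use assms False in_open_int ell_transversal in auto)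
qed

lemma ell_zero_between_zeros:
  assumes dp: "dp > 0" and "0 \<le> a" "a < c" and c: "c \<in> open_int B ap dp bm gm"
    and "slow_integral B ap dp bm gm a = 0" "slow_integral B ap dp bm gm c = 0"
  obtains z where "a < z" "z < c" "ell B ap dp bm gm z = 0"
proof -
  have in_open_int: "z \<in> open_int B ap dp bm gm" if "a < z" "z \<le> c" for z
    using open_int_downward_closed[OF c] that assms(2) by simp
  obtain z where z: "a < z" "z < c" "(slow_integral B ap dp bm gm has_real_derivative 0) (at z)"
  proof (rule Rolle[THEN exE])
    show "continuous_on {a..c} (slow_integral B ap dp bm gm)"
      by (rule continuous_on_subset[OF continuous_on_slow_integral[OF c]]) (use assms(2) in auto)
    show "slow_integral B ap dp bm gm differentiable (at z)" if "a < z" "z < c" for z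
      using slow_integral_deriv[OF dp in_open_int] that real_differentiable_def by (metis less_imp_le)
  qed (use assms in auto)
  obtain C where "C > 0" and C: "(slow_integral B ap dp bm gm has_real_derivative C * ell B ap dp bm gm z) (at z)"
    using slow_integral_deriv[OF dp in_open_int[of z]] z by auto
  then have "ell B ap dp bm gm z = 0"
    using DERIV_unique[OF C z(3)] by simp
  with z that show ?thesis
    by blast
qed

lemma slow_integral_at_most_one_zero:
  assumes dp: "dp > 0" and cond: "sdi_cond bm gm B ap dp"
  shows "at_most_one_zero_mult (slow_integral B ap dp bm gm) (open_int B ap dp bm gm)"
  unfolding at_most_one_zero_mult_def
proof (intro conjI ballI impI)
  fix x assume x: "x \<in> open_int B ap dp bm gm" and zero: "slow_integral B ap dp bm gm x = 0"
  obtain z where z: "0 < z" "z < x" "ell B ap dp bm gm z = 0"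
    using ell_zero_between_zeros[OF dp _ open_int_pos[OF x] x slow_integral_0 zero] by auto
  obtain C where "C > 0" and C: "(slow_integral B ap dp bm gm has_real_derivative C * ell B ap dp bm gm x) (at x)"
    using slow_integral_deriv[OF dp x] by auto
  moreover have "ell B ap dp bm gm x \<noteq> 0"
    using ell_zero_unique[OF dp cond open_int_downward_closed[OF x z(1)] x] z by force
  ultimately show "simple_zero (slow_integral B ap dp bm gm) x"
    using zero by (auto simp: simple_zero_def)
next
  fix x y assume x: "x \<in> open_int B ap dp bm gm" and y: "y \<in> open_int B ap dp bm gm"
    and zeros: "slow_integral B ap dp bm gm x = 0 \<and> slow_integral B ap dp bm gm y = 0"
  have "a = c" if "a \<le> c" and a: "a \<in> open_int B ap dp bm gm" and c: "c \<in> open_int B ap dp bm gm"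
    and zero_a: "slow_integral B ap dp bm gm a = 0" and zero_c: "slow_integral B ap dp bm gm c = 0" for a c
  proof (rule ccontr)
    assume "a \<noteq> c"
    with \<open>a \<le> c\<close> have "a < c"
      by simp
    obtain z1 where z1: "0 < z1" "z1 < a" "ell B ap dp bm gm z1 = 0"
      using ell_zero_between_zeros[OF dp _ open_int_pos[OF a] a slow_integral_0 zero_a] by auto
    obtain z2 where z2: "a < z2" "z2 < c" "ell B ap dp bm gm z2 = 0"
      using ell_zero_between_zeros[OF dp _ \<open>a < c\<close> c zero_a zero_c] open_int_pos[OF a] by force
    have "z1 = z2"
      using ell_zero_unique[OF dp cond open_int_downward_closed[OF c z1(1)]
          open_int_downward_closed[OF c] _ z1(3) z2(3)] z1 z2 by force
    with z1 z2 show False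
      by simp
  qed
  from this[of x y] this[of y x] x y zeros show "x = y"
    by linarith
qed

lemma slow_integral_degenerate:
  assumes Bd: "B > dp" "dp > 0" and ncond: "\<not> sdi_cond bm gm B ap dp"
    and x: "x \<in> open_int B ap dp bm gm"
  shows "slow_integral B ap dp bm gm x = 0"
proof -
  define r where "r = Pi_map bm gm x"
  have ret: "return_point bm gm x r"
    using return_point_Pi_map[OF x] by (simp add: r_def)
  consider "bm = 0" "ap = - gm * (B - dp)" | "bm \<noteq> 0" "ap = 0" "gm = 0"
    using ncond unfolding sdi_cond_def by (auto simp: algebra_simps)
  then show ?thesis
  proof cases
    case 1
    have "Xsl B ap dp u = (B - dp) / (1 + dp) * W_quad bm gm u" for u
      using Bd unfolding Xsl_def W_quad_def 1 by (simp add: field_simps)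
    then have "u / Xsl B ap dp u = (1 + dp) / (B - dp) * W_integrand bm gm u" for u
      by (simp add: W_integrand_def)
    then show ?thesis
      using ret by (simp add: slow_integral_def r_def[symmetric] return_point_def)
  next
    case 2
    then have "r = - x"
      using return_point_sign[OF open_int_pos[OF x] ret] by simp
    moreover have "u / Xsl B ap dp u = (1 + dp) / (B - dp) * u" for u
      using 2 Bd by (simp add: Xsl_def)
    ultimately show ?thesis
      using open_int_pos[OF x]
      by (simp add: slow_integral_def r_def[symmetric] integral_symmetric_interval continuous_on_mult_left)
  qed
qed

section \<open>An example with a simple zero\<close>

text \<open>An explicit orbit of \<open>Zm 2 2\<close> through \<open>(x\<^sub>0, 0)\<close>: the field has the unstable focus
  \<open>(1, 1/2)\<close> with eigenvalues \<open>1 \<plusminus> i\<close>.\<close>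
definition example_orbit :: "real \<Rightarrow> real \<Rightarrow> real \<times> real" where
  "example_orbit x0 s =
     (1 + exp s * ((x0 - 1) * cos s - x0 * sin s), 1/2 + exp s * ((1/2 - x0) * sin s - cos s / 2))"

lemma Zm_orbit_example: "Zm_orbit 2 2 x0 (example_orbit x0)"
proof
  fix s
  have "((\<lambda>s. 1 + exp s * ((x0 - 1) * cos s - x0 * sin s)) has_real_derivative
      exp s * ((1 - 2 * x0) * sin s - cos s)) (at s)"
    "((\<lambda>s. 1/2 + exp s * ((1/2 - x0) * sin s - cos s / 2)) has_real_derivative
      exp s * ((1 - x0) * sin s - x0 * cos s)) (at s)"
    by (auto intro!: derivative_eq_intros simp: field_simps)
  then have "(example_orbit x0 has_vector_derivative
      (exp s * ((1 - 2 * x0) * sin s - cos s), exp s * ((1 - x0) * sin s - x0 * cos s))) (at s)"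
    unfolding example_orbit_def[abs_def] has_real_derivative_iff_has_vector_derivative
    by (rule has_vector_derivative_Pair)
  then show "(example_orbit x0 has_vector_derivative Zm 2 2 (example_orbit x0 s)) (at s)"
    by (simp add: Zm_def example_orbit_def algebra_simps)
qed (simp add: example_orbit_def)

lemma example_pi_ret:
  assumes "x0 > 0"
  shows "pi_ret 2 2 x0 (Pi_map 2 2 x0)"
proof -
  interpret Zm_orbit 2 2 x0 "example_orbit x0"
    by (rule Zm_orbit_example)
  have "Y pi \<ge> 0"
    by (simp add: Y_def example_orbit_def add_nonneg_nonneg)
  then obtain t where "t > 0" "\<And>s. s \<in> {0<..<t} \<Longrightarrow> Y s < 0" "Y t = 0"
    using first_return_exists[OF assms pi_gt_zero] by blast
  then have "pi_ret 2 2 x0 (X t)"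
    by (rule pi_ret_of_first_return)
  with Pi_map_eq[OF assms this] show ?thesis
    by simp
qed

lemma example_open_int:
  assumes "0 < x" "x < 1"
  shows "x \<in> open_int 2 (-1) 1 2 2"
  unfolding open_int_def
proof (intro CollectI conjI subsetI)
  fix y assume y: "y \<in> {0..x}"
  show "y \<in> good_set 2 (-1) 1 2 2"
  proof (cases "y = 0")
    case False
    then have "y > 0"
      using y by simp
    then have "pi_ret 2 2 y (Pi_map 2 2 y)"
      by (rule example_pi_ret)
    moreover have "Pi_map 2 2 y < 0"
      using return_point_of_pi_ret[OF \<open>y > 0\<close> calculation] by (simp add: return_point_def)
    ultimately show ?thesis
      using \<open>y > 0\<close> y assms by (auto simp: good_set_def Pi_dom_def Xsl_def)
  qed (simp add: good_set_def Pi_dom_def Pi_map_0 Xsl_def)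
qed (use assms in simp)

lemma example_Pi_map_bounds:
  assumes "0 < y" "y < 1"
  shows "Pi_map 2 2 1 < Pi_map 2 2 y" "Pi_map 2 2 y < - y"
proof -
  have ret: "return_point 2 2 y (Pi_map 2 2 y)" "return_point 2 2 1 (Pi_map 2 2 1)"
    using return_point_of_pi_ret example_pi_ret assms by simp_all
  show "Pi_map 2 2 1 < Pi_map 2 2 y"
    using return_point_antimono[OF assms ret] .
  show "Pi_map 2 2 y < - y"
    using return_point_sign[OF assms(1) ret(1)] by simp
qed

lemma example_return_point_1_neg: "Pi_map 2 2 1 < 0"
  using return_point_of_pi_ret[OF _ example_pi_ret] by (simp add: return_point_def)

lemma example_slow_integral_neg:
  obtains xa where "0 < xa" "xa < 1" "slow_integral 2 (-1) 1 2 2 xa < 0"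
proof -
  define M where "M = - Pi_map 2 2 1"
  have M: "M > 0"
    using example_return_point_1_neg by (simp add: M_def)
  define xa where "xa = 1 / (4 * M + 2)"
  have xa: "0 < xa" "xa < 1" "xa * M < 1 / 4"
    using M by (simp_all add: xa_def field_simps)
  have ell_neg: "ell 2 (-1) 1 2 2 z < 0" if z: "0 < z" "z < xa" for z
  proof -
    have "z * (- Pi_map 2 2 z) < z * M"
      using example_Pi_map_bounds(1)[of z] z xa by (intro mult_strict_left_mono) (auto simp: M_def)
    also have "\<dots> < xa * M"
      using z M by (intro mult_strict_right_mono) auto
    finally have "z * (- Pi_map 2 2 z) < 1 / 4"
      using xa by simp
    moreover have "z + Pi_map 2 2 z < 0"
      using example_Pi_map_bounds(2)[of z] z xa by simp
    ultimately show ?thesis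
      by (simp add: ell_def algebra_simps)
  qed
  have "continuous_on {0..xa} (slow_integral 2 (-1) 1 2 2)"
    using continuous_on_slow_integral[OF example_open_int] xa by simp
  moreover have deriv: "\<exists>C>0. (slow_integral 2 (-1) 1 2 2 has_real_derivative C * ell 2 (-1) 1 2 2 z) (at z)"
    if "0 < z" "z < xa" for z
    using slow_integral_deriv[of 1, OF _ example_open_int] that xa by (metis less_trans zero_less_one)
  ultimately obtain l z where z: "0 < z" "z < xa" and l: "(slow_integral 2 (-1) 1 2 2 has_real_derivative l) (at z)"
    and mvt: "slow_integral 2 (-1) 1 2 2 xa - slow_integral 2 (-1) 1 2 2 0 = (xa - 0) * l"
    using MVT[OF xa(1)] real_differentiable_def by meson
  obtain C where "C > 0" "(slow_integral 2 (-1) 1 2 2 has_real_derivative C * ell 2 (-1) 1 2 2 z) (at z)"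
    using deriv[OF z] by blast
  then have "l < 0"
    using DERIV_unique[OF l] ell_neg[OF z] by (simp add: mult_pos_neg)
  then show ?thesis
    using that[of xa] xa mvt by (simp add: slow_integral_0 mult_pos_neg)
qed

text \<open>The part of the integral over \<open>[\<Pi>(x), 0]\<close> is bounded below by \<open>- \<Pi>(1)\<^sup>2\<close>, the part
  over \<open>[0, x]\<close> diverges logarithmically as \<open>x \<rightarrow> 1\<close>.\<close>
lemma example_slow_integral_pos:
  obtains xb where "0 < xb" "xb < 1" "slow_integral 2 (-1) 1 2 2 xb > 0"
proof -
  define M where "M = - Pi_map 2 2 1"
  define xb where "xb = 1 - exp (- (M\<^sup>2 + 2) / 2)"
  have "M\<^sup>2 + 2 > 0"
    by (simp add: add_nonneg_pos)
  then have xb: "0 < xb" "xb < 1" and ln_xb: "ln (1 - xb) = - (M\<^sup>2 + 2) / 2"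
    by (simp_all add: xb_def)
  define r where "r = Pi_map 2 2 xb"
  have r: "- M < r" "r < 0"
    using example_Pi_map_bounds[OF xb] xb by (simp_all add: M_def r_def)
  define h where "h u = 2 * u / (1 - u)" for u :: real
  have h_eq: "u / Xsl 2 (-1) 1 u = h u" for u
    by (simp add: Xsl_def h_def)
  have h_cont: "continuous_on {r..xb} h"
    unfolding h_def using xb by (intro continuous_intros) auto
  have "integral {r..0} (\<lambda>u. 2 * u) \<le> integral {r..0} h"
  proof (rule integral_le)
    show "h integrable_on {r..0}"
      using r xb by (intro integrable_continuous_interval continuous_on_subset[OF h_cont]) auto
    show "2 * u \<le> h u" if "u \<in> {r..0}" for u
      using that by (simp add: h_def le_divide_eq algebra_simps mult_nonneg_nonpos)
  qed (auto intro: integrable_continuous_interval continuous_intros)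
  moreover have "integral {r..0} (\<lambda>u. 2 * u) = - r\<^sup>2"
    using integral_eq_primitive_diff[of r 0 "\<lambda>u. u\<^sup>2"] r by (auto intro!: derivative_eq_intros)
  moreover have "integral {0..xb} h = - 2 * xb - 2 * ln (1 - xb)"
  proof -
    have "((\<lambda>v. - 2 * v - 2 * ln (1 - v)) has_real_derivative h v) (at v)" if "v \<in> {0..xb}" for v
      using that xb by (auto intro!: derivative_eq_intros simp: h_def field_simps)
    then show ?thesis
      using integral_eq_primitive_diff[of 0 xb "\<lambda>v. - 2 * v - 2 * ln (1 - v)" h] xb by simp
  qed
  moreover have "slow_integral 2 (-1) 1 2 2 xb = integral {r..0} h + integral {0..xb} h"
    using integral_combine_continuous[OF h_cont, of 0] r xb by (simp add: slow_integral_def h_eq r_def)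
  ultimately have "slow_integral 2 (-1) 1 2 2 xb \<ge> - r\<^sup>2 - 2 * xb + (M\<^sup>2 + 2)"
    using ln_xb by (simp add: field_simps)
  moreover have "(- r)\<^sup>2 < M\<^sup>2"
    using r by (intro power_strict_mono) auto
  ultimately show ?thesis
    using that[of xb] xb by simp
qed

lemma example_slow_integral_zero:
  obtains z where "z \<in> open_int 2 (-1) 1 2 2" "slow_integral 2 (-1) 1 2 2 z = 0"
proof -
  obtain xa where xa: "0 < xa" "xa < 1" "slow_integral 2 (-1) 1 2 2 xa < 0"
    using example_slow_integral_neg by blast
  obtain xb where xb: "0 < xb" "xb < 1" "slow_integral 2 (-1) 1 2 2 xb > 0"
    using example_slow_integral_pos by blast
  have cont: "continuous_on {min xa xb..max xa xb} (slow_integral 2 (-1) 1 2 2)"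
    by (rule continuous_on_subset[OF continuous_on_slow_integral[OF example_open_int[of "max xa xb"]]])
      (use xa xb in auto)
  obtain z where "min xa xb \<le> z" "z \<le> max xa xb" "slow_integral 2 (-1) 1 2 2 z = 0"
  proof (cases "xa \<le> xb")
    case True
    then show ?thesis
      using IVT'[of "slow_integral 2 (-1) 1 2 2" xa 0 xb] cont xa xb that by fastforce
  next
    case False
    then show ?thesis
      using IVT2'[of "slow_integral 2 (-1) 1 2 2" xa 0 xb] cont xa xb that by fastforce
  qed
  moreover have "z \<in> open_int 2 (-1) 1 2 2"
    using calculation xa xb by (intro example_open_int) auto
  ultimately show ?thesis
    using that by blast
qed

lemma at_most_one_zero_mult_cmult:
  assumes "c \<noteq> 0" "at_most_one_zero_mult f S"
  shows "at_most_one_zero_mult (\<lambda>x. c * f x) S"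
  using assms DERIV_cmult[where f = f and c = c] unfolding at_most_one_zero_mult_def simple_zero_def by fastforce

theorem theorem2p5:
  fixes B ap bp cp dp bm gm :: real and phi :: "real \<Rightarrow> real"
  assumes "B > dp" and "dp > 0"
    and "\<forall>n s. ((deriv ^^ n) phi) differentiable (at s)"
    and "\<forall>s. deriv phi s > 0"
    and "(phi \<longlongrightarrow> 1) at_top" and "(phi \<longlongrightarrow> 0) at_bot"
  shows "(sdi_cond bm gm B ap dp \<longrightarrow>
            at_most_one_zero_mult (sdi phi B ap dp bm gm) (open_int B ap dp bm gm))
       \<and> (\<exists>bm' gm' B' ap' dp' :: real. B' > dp' \<and> dp' > 0 \<and> sdi_cond bm' gm' B' ap' dp' \<and>
            (\<exists>x\<in>open_int B' ap' dp' bm' gm'. simple_zero (sdi phi B' ap' dp' bm' gm') x))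
       \<and> (\<not> sdi_cond bm gm B ap dp \<longrightarrow>
            (\<forall>x\<in>insert 0 (open_int B ap dp bm gm). sdi phi B ap dp bm gm x = 0))"
proof (intro conjI impI)
  define K where "K d = (1 + d) * deriv phi (inv phi (1 / (1 + d)))" for d
  have K: "K d \<noteq> 0" if "d > 0" for d
    using assms(4)[rule_format, of "inv phi (1 / (1 + d))"] that by (simp add: K_def)
  have sdi: "sdi phi B' ap' d bm' gm' = (\<lambda>x. K d * slow_integral B' ap' d bm' gm' x)" for B' ap' d bm' gm'
    by (simp add: sdi_def slow_integral_def K_def fun_eq_iff)
  show "at_most_one_zero_mult (sdi phi B ap dp bm gm) (open_int B ap dp bm gm)" if "sdi_cond bm gm B ap dp"
    unfolding sdi using at_most_one_zero_mult_cmult K slow_integral_at_most_one_zero that assms(2) by blast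
  have cond: "sdi_cond 2 2 2 (-1) 1"
    by (simp add: sdi_cond_def)
  obtain z where z: "z \<in> open_int 2 (-1) 1 2 2" "slow_integral 2 (-1) 1 2 2 z = 0"
    using example_slow_integral_zero by blast
  have "at_most_one_zero_mult (sdi phi 2 (-1) 1 2 2) (open_int 2 (-1) 1 2 2)"
    unfolding sdi by (intro at_most_one_zero_mult_cmult K slow_integral_at_most_one_zero cond) simp_all
  then have "simple_zero (sdi phi 2 (-1) 1 2 2) z"
    using z by (auto simp: at_most_one_zero_mult_def sdi)
  with z(1) cond show "\<exists>bm' gm' B' ap' dp' :: real. B' > dp' \<and> dp' > 0 \<and> sdi_cond bm' gm' B' ap' dp' \<and>
      (\<exists>x\<in>open_int B' ap' dp' bm' gm'. simple_zero (sdi phi B' ap' dp' bm' gm') x)"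
    by (intro exI[of _ 2] exI[of _ "-1"] exI[of _ 1]) auto
  show "\<forall>x\<in>insert 0 (open_int B ap dp bm gm). sdi phi B ap dp bm gm x = 0" if "\<not> sdi_cond bm gm B ap dp"
    using slow_integral_degenerate[OF assms(1,2) that] by (auto simp: sdi slow_integral_0)
qed

end
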